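(* Let $m\geq1$ be a fixed integer and $s\in\mathbb{C}$ with $\Re(s)=\sigma>1$. Then the spectrum $$F(\sigma)=\lim_{x\to\infty}\frac1x\sum_{n\leq x}f(n,s)f(n+m,\overline{s})=\sum_{q\geq1}\left|\frac{\mu(q)}{q^{s-1}\varphi(q)}\right|^2c_q(m)$$ has the product decomposition $$F(\sigma)=\prod_{p\mid m}\Big(1+\frac{1}{p^{2\sigma-2}(p-1)}\Big)\prod_{p\nmid m}\Big(1-\frac{1}{p^{2\sigma-2}(p-1)^2}\Big).$$ Moreover: (1) if $m$ is odd, then $F(1)=0$ (the limiting value as $\sigma\to1$); (2) if $m\geq2$ is even and $\sigma\geq1$, then $F(\sigma)\geq 1/2$.
   Context: For integers $q\geq1$ and $n$, the Ramanujan sum is $c_q(n)=\sum_{1\leq k\leq q,\ \gcd(k,q)=1}e^{2\pi i kn/q}$; $\mu$ is the Möbius function, $\varphi$ Euler's totient. For $n\geq 1$ and $\Re(s)>1$, $f(n,s)=\sum_{q\geq 1}\frac{\mu(q)}{q^{s-1}\varphi(q)}c_q(n)$. Products over $p$ run over primes. *)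

theory Defs
  imports "HOL-Analysis.Analysis" "HOL-Number_Theory.Number_Theory" "HOL-Computational_Algebra.Squarefree"
begin

text \<open>Moebius function (mu 0 = 0 by convention; only q >= 1 is used).\<close>
definition mu :: "nat \<Rightarrow> int" where
  "mu n = (if n = 0 \<or> \<not> squarefree n then 0 else (-1) ^ card (prime_factors n))"

definition ramanujan_sum :: "nat \<Rightarrow> nat \<Rightarrow> complex" where
  "ramanujan_sum q n = (\<Sum>k\<in>{k. 1 \<le> k \<and> k \<le> q \<and> coprime k q}.
      exp (2 * pi * \<i> * of_nat k * of_nat n / of_nat q))"

definition coef :: "complex \<Rightarrow> nat \<Rightarrow> complex" where
  "coef s q = of_int (mu q) / (of_nat q powr (s - 1) * of_nat (totient q))"

definition fns :: "nat \<Rightarrow> complex \<Rightarrow> complex" where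
  "fns n s = (\<Sum>q. coef s (Suc q) * ramanujan_sum (Suc q) n)"

definition spectrum :: "nat \<Rightarrow> complex \<Rightarrow> complex" where
  "spectrum m s = (\<Sum>q. complex_of_real ((cmod (coef s (Suc q)))\<^sup>2) * ramanujan_sum (Suc q) m)"

definition euler_factor :: "nat \<Rightarrow> real \<Rightarrow> nat \<Rightarrow> real" where
  "euler_factor m \<sigma> p =
     (if \<not> prime p then 1
      else if p dvd m then 1 + 1 / (real p powr (2 * \<sigma> - 2) * (real p - 1))
      else 1 - 1 / (real p powr (2 * \<sigma> - 2) * (real p - 1)\<^sup>2))"

end

theory Submission
  imports Defs "HOL-Real_Asymp.Real_Asymp"
begin

text \<open>
  Write \<open>\<alpha>\<^sub>\<sigma>(q) = |\<mu>(q)| / (q\<^sup>\<sigma>\<^sup>-\<^sup>1 \<phi>(q))\<close>. The Ramanujan sum \<open>c\<^sub>q\<close> is multiplicative in \<open>q\<close>, with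
  \<open>c\<^sub>p(m) = p - 1\<close> or \<open>-1\<close> according as \<open>p\<close> divides \<open>m\<close> or not. Hence the terms
  \<open>\<alpha>\<^sub>\<sigma>(q)\<^sup>2 c\<^sub>q(m)\<close> of the spectrum form a multiplicative function supported on squarefree \<open>q\<close>;
  it is absolutely summable for \<open>\<sigma> \<ge> 1\<close>, so its series equals the Euler product of the factors
  \<open>1 + \<alpha>\<^sub>\<sigma>(p)\<^sup>2 c\<^sub>p(m)\<close>, which are the stated ones. For \<open>p \<ge> 3\<close> these factors lie between
  \<open>1 - 1/(p - 1)\<^sup>2\<close> and \<open>2\<close> (the latter only for \<open>p | m\<close>), and the product of the lower bounds telescopes to
  at least \<open>1/2\<close>. So the factor at \<open>2\<close> decides: it is at least \<open>1\<close> for even \<open>m\<close>, and equals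
  \<open>1 - 2\<^sup>2\<^sup>-\<^sup>2\<^sup>\<sigma>\<close>, which tends to \<open>0\<close>, for odd \<open>m\<close>.

  For the mean value, truncate both series defining \<open>f\<close> at \<open>q \<le> Q\<close>. The mean value of
  \<open>c\<^sub>q(n) c\<^sub>r(n + m)\<close> is \<open>c\<^sub>q(m)\<close> if \<open>q = r\<close> and \<open>0\<close> otherwise (orthogonality of additive characters), which
  produces the truncated spectrum. The truncation error is \<open>O(Q\<^sup>-\<^sup>\<delta>)\<close> uniformly in \<open>x\<close>, because
  \<open>|c\<^sub>q(n)| \<le> gcd(n, q)\<close> for squarefree \<open>q\<close> gives a majorant of \<open>|f(n, s)|\<close> with bounded mean square.
\<close>

lemma prime_factors_prod_primes:
  assumes "finite B" "\<forall>p\<in>B. prime p"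
  shows "prime_factors (\<Prod>B) = (B::nat set)"
proof -
  have "0 \<notin> (\<lambda>p. p) ` B" using assms by auto
  then have "prime_factors (\<Prod>p\<in>B. p) = \<Union> ((prime_factors \<circ> (\<lambda>p. p)) ` B)"
    using prime_factors_prod[OF assms(1)] by blast
  also have "\<dots> = B" using assms(2) by (auto simp: prime_prime_factors)
  finally show ?thesis by simp
qed

lemma coprime_prime_prod_primes:
  assumes "prime (p::nat)" "p \<notin> B" "\<forall>q\<in>B. prime q"
  shows "coprime p (\<Prod>B)"
  by (rule prod_coprime_right) (metis assms primes_coprime)

lemma prod_primes_pos: "\<forall>p\<in>B. prime (p::nat) \<Longrightarrow> \<Prod>B > 0"
  by (metis prime_gt_0_nat prod_pos)

lemma squarefree_prod_primes:
  assumes "finite B" "\<forall>p\<in>B. prime p"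
  shows "squarefree (\<Prod>B::nat)"
  using assms
proof (induction B rule: finite_induct)
  case (insert p B)
  then show ?case
    by (simp add: squarefree_mult_coprime coprime_prime_prod_primes squarefree_prime)
qed simp

lemma prod_prime_factors_squarefree:
  assumes "n > 0" "squarefree (n::nat)"
  shows "\<Prod>(prime_factors n) = n"
proof -
  have "n = (\<Prod>p\<in>prime_factors n. p ^ multiplicity p n)"
    using prime_factorization_nat assms(1) by blast
  also have "\<dots> = (\<Prod>p\<in>prime_factors n. p)"
  proof (rule prod.cong)
    fix p assume p: "p \<in> prime_factors n"
    then have "prime p" by auto
    have "multiplicity p n \<le> 1" using assms squarefree_factorial_semiring'' \<open>prime p\<close> by blast
    moreover have "multiplicity p n > 0" using p prime_factors_multiplicity by blast
    ultimately have "multiplicity p n = 1" by linarith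
    then show "p ^ multiplicity p n = p" by simp
  qed simp
  finally show ?thesis by simp
qed

lemma prod_dvd_of_subset_prime_factors:
  assumes "finite B" "\<forall>p\<in>B. prime p" "B \<subseteq> prime_factors (n::nat)"
  shows "\<Prod>B dvd n"
  using assms
proof (induction B rule: finite_induct)
  case (insert p B)
  then show ?case by (auto intro!: divides_mult coprime_prime_prod_primes)
qed simp

definition primes_le :: "nat \<Rightarrow> nat set" where
  "primes_le N = {p. prime p \<and> p \<le> N}"

lemma finite_primes_le [simp]: "finite (primes_le N)"
  unfolding primes_le_def by auto

lemma primes_le_prime: "\<forall>p\<in>primes_le N. prime p"
  by (simp add: primes_le_def)

lemma prime_factors_subset_primes_le: "0 < n \<Longrightarrow> n \<le> N \<Longrightarrow> prime_factors n \<subseteq> primes_le N"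
  unfolding primes_le_def by (auto dest: dvd_imp_le intro: order_trans)

lemma subset_primes_le:
  assumes "B \<subseteq> primes_le N"
  shows "finite B" "\<forall>p\<in>B. prime p"
  using assms finite_subset[OF assms finite_primes_le] by (auto simp: primes_le_def)

lemma inj_on_prod_Pow_primes_le: "inj_on (\<lambda>B. \<Prod>B) (Pow (primes_le N))"
proof (rule inj_onI)
  fix X Y assume "X \<in> Pow (primes_le N)" "Y \<in> Pow (primes_le N)" and eq: "\<Prod>X = \<Prod>Y"
  then have "X \<subseteq> primes_le N" "Y \<subseteq> primes_le N" by simp_all
  then show "X = Y"
    using eq prime_factors_prod_primes[OF subset_primes_le] by metis
qed

lemma sum_prod_Pow_primes_le:
  "(\<Sum>q\<in>(\<lambda>B. \<Prod>B) ` Pow (primes_le N). h q) = (\<Sum>B\<in>Pow (primes_le N). h (\<Prod>B))"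
  by (simp add: sum.reindex inj_on_prod_Pow_primes_le)

lemma squarefree_in_prod_Pow_primes_le:
  assumes "0 < q" "q \<le> N" "squarefree q"
  shows "q \<in> (\<lambda>B. \<Prod>B) ` Pow (primes_le N)"
proof
  show "q = \<Prod>(prime_factors q)" using prod_prime_factors_squarefree assms(1,3) by simp
  show "prime_factors q \<in> Pow (primes_le N)"
    using prime_factors_subset_primes_le assms(1,2) by simp
qed

lemma prod_Pow_primes_le_pos:
  assumes "q \<in> (\<lambda>B. \<Prod>B) ` Pow (primes_le N)"
  shows "q > 0"
proof -
  obtain B where "B \<subseteq> primes_le N" "q = \<Prod>B" using assms by auto
  then show ?thesis using prod_primes_pos[OF subset_primes_le(2)] by simp
qed

section \<open>Ramanujan sums\<close>

definition e2pi :: "real \<Rightarrow> complex" where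
  "e2pi x = exp (2 * pi * \<i> * of_real x)"

lemma e2pi_add: "e2pi (x + y) = e2pi x * e2pi y"
  by (simp add: e2pi_def distrib_left exp_add)

lemma e2pi_eq_1_iff: "e2pi x = 1 \<longleftrightarrow> x \<in> \<int>"
proof
  assume "e2pi x = 1"
  then obtain n where "Im (2 * pi * \<i> * of_real x) = real_of_int (2 * n) * pi"
    unfolding e2pi_def exp_eq_1 by blast
  then show "x \<in> \<int>" by simp
next
  assume "x \<in> \<int>"
  then obtain n where "x = of_int n" by (auto elim: Ints_cases)
  then show "e2pi x = 1" unfolding e2pi_def exp_eq_1 by (intro conjI exI[of _ n]) auto
qed

lemma e2pi_of_nat: "e2pi (of_nat n) = 1"
  by (simp add: e2pi_eq_1_iff)

lemma e2pi_of_nat_mult: "e2pi (real n * x) = e2pi x ^ n"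
proof -
  have "e2pi (real n * x) = exp (of_nat n * (2 * pi * \<i> * of_real x))"
    by (simp add: e2pi_def algebra_simps)
  then show ?thesis by (simp add: exp_of_nat_mult e2pi_def)
qed

lemma norm_e2pi [simp]: "norm (e2pi x) = 1"
  by (simp add: e2pi_def)

lemma e2pi_mod:
  assumes "q > 0"
  shows "e2pi (real (a mod q) * real n / real q) = e2pi (real a * real n / real q)"
proof -
  have "real a = real (a mod q) + real (a div q) * real q"
    by (metis mod_div_mult_eq of_nat_add of_nat_mult add.commute)
  then have "real a * real n / real q = real (a mod q) * real n / real q + real (a div q * n)"
    using assms by (simp add: field_simps)
  then show ?thesis using e2pi_of_nat[of "a div q * n"] by (simp add: e2pi_add)
qed

text \<open>Residues are taken in \<open>{0..<q}\<close> rather than \<open>{1..q}\<close> as in \<open>ramanujan_sum\<close>,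
  so that the Chinese remainder map below stays inside the index set.\<close>

definition reduced_residues :: "nat \<Rightarrow> nat set" where
  "reduced_residues q = {k. k < q \<and> coprime k q}"

lemma reduced_residues_eq_totatives:
  assumes "q \<ge> 2"
  shows "reduced_residues q = totatives q"
proof -
  have "\<not> coprime q q" "\<not> coprime 0 q" using assms by simp_all
  then have "k < q \<and> coprime k q \<longleftrightarrow> k \<in> {0<..q} \<and> coprime k q" for k
    by (cases "k = 0"; cases "k = q") auto
  then show ?thesis unfolding reduced_residues_def totatives_def by blast
qed

lemma card_reduced_residues:
  assumes "q > 0"
  shows "card (reduced_residues q) = totient q"
proof (cases "q = 1")
  case True
  then have "reduced_residues q = {0}" by (auto simp: reduced_residues_def)
  then show ?thesis using True by simp
next
  case False
  then have "reduced_residues q = totatives q"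
    using assms by (intro reduced_residues_eq_totatives) simp
  then show ?thesis by (simp add: totient_def)
qed

lemma ramanujan_sum_reduced_residues:
  assumes "q > 0"
  shows "ramanujan_sum q n = (\<Sum>k\<in>reduced_residues q. e2pi (real k * real n / real q))"
proof (cases "q = 1")
  case True
  then have "{k. 1 \<le> k \<and> k \<le> q \<and> coprime k q} = {1}" "reduced_residues q = {0}"
    by (auto simp: reduced_residues_def)
  then show ?thesis using True e2pi_of_nat[of n] by (simp add: ramanujan_sum_def e2pi_def)
next
  case False
  then have "reduced_residues q = totatives q"
    using assms by (intro reduced_residues_eq_totatives) simp
  also have "totatives q = {k. 1 \<le> k \<and> k \<le> q \<and> coprime k q}"
    unfolding totatives_def by auto
  finally show ?thesis by (simp add: ramanujan_sum_def e2pi_def mult.assoc)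
qed

lemma coprime_add_mult_coprime:
  assumes "coprime a q" "coprime r q" "q > 0"
  shows "coprime (a * r + b * q) (q::nat)"
proof -
  have "(a * r + b * q) mod q = (a * r) mod q" by simp
  moreover have "coprime (a * r) q" using assms by simp
  ultimately show ?thesis using assms(3) by (metis coprime_mod_left_iff not_gr0)
qed

lemma finite_reduced_residues [simp]: "finite (reduced_residues q)"
  unfolding reduced_residues_def by auto

lemma crt_reduced_residues_into:
  assumes "coprime q r" "q > 0" "r > 0" "a \<in> reduced_residues q" "b \<in> reduced_residues r"
  shows "(a * r + b * q) mod (q * r) \<in> reduced_residues (q * r)"
proof -
  have qr: "q * r > 0" using assms(2,3) by simp
  have "coprime a q" "coprime b r" using assms(4,5) by (simp_all add: reduced_residues_def)
  have "coprime (a * r + b * q) q"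
    using coprime_add_mult_coprime[of a q r b] \<open>coprime a q\<close> assms by (simp add: coprime_commute)
  moreover have "coprime (a * r + b * q) r"
    using coprime_add_mult_coprime[of b r q a] \<open>coprime b r\<close> assms
    by (simp add: coprime_commute add.commute)
  ultimately have "coprime ((a * r + b * q) mod (q * r)) (q * r)"
    using qr by (subst coprime_mod_left_iff) auto
  then show ?thesis using qr by (simp add: reduced_residues_def)
qed

lemma crt_reduced_residues_inj:
  assumes "coprime q r"
  shows "inj_on (\<lambda>(a, b). (a * r + b * q) mod (q * r)) (reduced_residues q \<times> reduced_residues r)"
proof (rule inj_onI, clarify)
  fix a b a' b'
  assume ab: "a \<in> reduced_residues q" "b \<in> reduced_residues r"
    "a' \<in> reduced_residues q" "b' \<in> reduced_residues r"
    and e: "(a * r + b * q) mod (q * r) = (a' * r + b' * q) mod (q * r)"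
  have "(a * r + b * q) mod q = (a' * r + b' * q) mod q"
    using e by (metis mod_mod_cancel dvd_triv_left)
  then have "[a * r = a' * r] (mod q)" by (simp add: cong_def)
  then have "[a = a'] (mod q)" using cong_mult_rcancel_nat assms by (metis coprime_commute)
  then have "a = a'" using ab by (simp add: cong_def reduced_residues_def)
  have "(a * r + b * q) mod r = (a' * r + b' * q) mod r"
    using e by (metis mod_mod_cancel dvd_triv_right)
  then have "[b * q = b' * q] (mod r)" by (simp add: cong_def)
  then have "[b = b'] (mod r)" using cong_mult_rcancel_nat assms by metis
  then have "b = b'" using ab by (simp add: cong_def reduced_residues_def)
  show "a = a' \<and> b = b'" using \<open>a = a'\<close> \<open>b = b'\<close> ..
qed

lemma crt_reduced_residues_bij:
  assumes "coprime q r" "q > 0" "r > 0"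
  shows "bij_betw (\<lambda>(a, b). (a * r + b * q) mod (q * r))
           (reduced_residues q \<times> reduced_residues r) (reduced_residues (q * r))"
proof -
  let ?h = "\<lambda>(a, b). (a * r + b * q) mod (q * r)"
  have inj: "inj_on ?h (reduced_residues q \<times> reduced_residues r)"
    by (rule crt_reduced_residues_inj[OF assms(1)])
  moreover have "?h ` (reduced_residues q \<times> reduced_residues r) \<subseteq> reduced_residues (q * r)"
    using crt_reduced_residues_into[OF assms] by auto
  moreover have "card (?h ` (reduced_residues q \<times> reduced_residues r)) = card (reduced_residues (q * r))"
    using inj assms
    by (simp add: card_image card_cartesian_product card_reduced_residues totient_mult_coprime)
  ultimately show ?thesis
    by (simp add: bij_betw_def card_subset_eq)
qed

lemma ramanujan_sum_mult:
  assumes "coprime q r" "q > 0" "r > 0"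
  shows "ramanujan_sum (q * r) n = ramanujan_sum q n * ramanujan_sum r n"
proof -
  let ?h = "\<lambda>(a, b). (a * r + b * q) mod (q * r)"
  have qr: "q * r > 0" using assms by simp
  have "ramanujan_sum q n * ramanujan_sum r n =
        (\<Sum>x\<in>reduced_residues q \<times> reduced_residues r.
           e2pi (real (fst x) * n / q) * e2pi (real (snd x) * n / r))"
    using assms by (simp add: ramanujan_sum_reduced_residues sum_product sum.cartesian_product')
  also have "\<dots> = (\<Sum>x\<in>reduced_residues q \<times> reduced_residues r. e2pi (real (?h x) * n / (q * r)))"
  proof (rule sum.cong, simp, clarify)
    fix a b
    have "real a * n / q + real b * n / r = real (a * r + b * q) * n / (q * r)"
      using assms by (simp add: field_simps)
    then show "e2pi (real (fst (a, b)) * n / q) * e2pi (real (snd (a, b)) * n / r)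
        = e2pi (real ((a * r + b * q) mod (q * r)) * n / (q * r))"
      using e2pi_mod[OF qr, of "a * r + b * q" n] by (simp add: e2pi_add[symmetric])
  qed
  also have "\<dots> = (\<Sum>k\<in>reduced_residues (q * r). e2pi (real k * n / (q * r)))"
    by (rule sum.reindex_bij_betw[OF crt_reduced_residues_bij[OF assms]])
  finally show ?thesis using qr by (simp add: ramanujan_sum_reduced_residues)
qed

lemma ramanujan_sum_prime:
  assumes "prime p"
  shows "ramanujan_sum p n = (if p dvd n then of_nat p - 1 else -1)"
proof -
  have p0: "p > 0" using assms prime_gt_0_nat by blast
  have residues: "reduced_residues p = {..<p} - {0}"
    unfolding reduced_residues_def using assms by (auto simp: prime_nat_iff'' coprime_commute)
  define z where "z = e2pi (real n / p)"
  have "ramanujan_sum p n = (\<Sum>k\<in>{..<p} - {0}. z ^ k)"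
    using p0 e2pi_of_nat_mult[of _ "real n / p"]
    by (simp add: ramanujan_sum_reduced_residues residues z_def)
  also have "\<dots> = (\<Sum>k<p. z ^ k) - 1"
    using p0 by (simp add: sum_diff1)
  finally have c: "ramanujan_sum p n = (\<Sum>k<p. z ^ k) - 1" .
  have "z ^ p = 1"
    using e2pi_of_nat_mult[of p "real n / p"] e2pi_of_nat[of n] p0 by (simp add: z_def)
  moreover have "z = 1 \<longleftrightarrow> p dvd n"
    using complex_root_unity_eq_1[of p n] p0 by (simp add: z_def e2pi_def)
  ultimately show ?thesis
    using c geometric_sum[of z p] by auto
qed

lemma ramanujan_sum_prod_primes:
  assumes "finite B" "\<forall>p\<in>B. prime p"
  shows "ramanujan_sum (\<Prod>B) n = (\<Prod>p\<in>B. ramanujan_sum p n)"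
  using assms
proof (induction B rule: finite_induct)
  case empty
  show ?case using ramanujan_sum_reduced_residues[of 1 n]
    by (simp add: reduced_residues_def e2pi_def)
next
  case (insert p B)
  have "coprime p (\<Prod>B)" "p > 0" "\<Prod>B > 0"
    using insert coprime_prime_prod_primes prime_gt_0_nat prod_primes_pos by auto
  then show ?case using insert by (simp add: ramanujan_sum_mult)
qed

definition ramanujan_sum_prime_val :: "nat \<Rightarrow> nat \<Rightarrow> real" where
  "ramanujan_sum_prime_val n p = (if p dvd n then real p - 1 else -1)"

lemma ramanujan_sum_squarefree:
  assumes "q > 0" "squarefree q"
  shows "ramanujan_sum q n = of_real (\<Prod>p\<in>prime_factors q. ramanujan_sum_prime_val n p)"
proof -
  have "ramanujan_sum q n = ramanujan_sum (\<Prod>(prime_factors q)) n"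
    using prod_prime_factors_squarefree[OF assms] by simp
  also have "\<dots> = (\<Prod>p\<in>prime_factors q. ramanujan_sum p n)"
    by (rule ramanujan_sum_prod_primes) auto
  also have "\<dots> = (\<Prod>p\<in>prime_factors q. of_real (ramanujan_sum_prime_val n p))"
  proof (rule prod.cong[OF refl])
    fix p assume "p \<in> prime_factors q"
    then have "prime p" by auto
    then show "ramanujan_sum p n = of_real (ramanujan_sum_prime_val n p)"
      by (simp add: ramanujan_sum_prime ramanujan_sum_prime_val_def)
  qed
  finally show ?thesis by simp
qed

definition rad_gcd :: "nat \<Rightarrow> nat \<Rightarrow> real" where
  "rad_gcd n q = (\<Prod>p\<in>prime_factors q. if p dvd n then real p else 1)"

lemma rad_gcd_ge_1: "rad_gcd n q \<ge> 1"
  unfolding rad_gcd_def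
proof (rule prod_ge_1)
  fix p assume "p \<in> prime_factors q"
  then have "p \<ge> 1" using prime_ge_1_nat by auto
  then show "1 \<le> (if p dvd n then real p else 1)" by auto
qed

lemma rad_gcd_prod_primes:
  assumes "finite B" "\<forall>p\<in>B. prime p"
  shows "rad_gcd n (\<Prod>B) = (\<Prod>p\<in>B. if p dvd n then real p else 1)"
  unfolding rad_gcd_def using prime_factors_prod_primes[OF assms] by simp

lemma norm_ramanujan_sum_le:
  assumes "q > 0" "squarefree q"
  shows "cmod (ramanujan_sum q n) \<le> rad_gcd n q"
proof -
  have "cmod (ramanujan_sum q n) = (\<Prod>p\<in>prime_factors q. \<bar>ramanujan_sum_prime_val n p\<bar>)"
    using ramanujan_sum_squarefree[OF assms, of n] by (simp add: prod_norm[symmetric])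
  also have "\<dots> \<le> rad_gcd n q"
    unfolding rad_gcd_def
  proof (rule prod_mono)
    fix p assume "p \<in> prime_factors q"
    then have "p \<ge> 2" using prime_ge_2_nat by auto
    then show "0 \<le> \<bar>ramanujan_sum_prime_val n p\<bar> \<and>
        \<bar>ramanujan_sum_prime_val n p\<bar> \<le> (if p dvd n then real p else 1)"
      by (auto simp: ramanujan_sum_prime_val_def)
  qed
  finally show ?thesis .
qed

definition coef_abs :: "real \<Rightarrow> nat \<Rightarrow> real" where
  "coef_abs \<sigma> q = \<bar>real_of_int (mu q)\<bar> / (real q powr (\<sigma> - 1) * real (totient q))"

lemma coef_abs_nonneg: "coef_abs \<sigma> q \<ge> 0" unfolding coef_abs_def by simp

lemma norm_coef: "cmod (coef s q) = coef_abs (Re s) q"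
proof -
  have "cmod (of_nat q powr (s - 1)) = real q powr (Re s - 1)"
    using norm_powr_real_powr[of "of_nat q" "s - 1"] by simp
  then show ?thesis unfolding coef_def coef_abs_def by (simp add: norm_divide norm_mult)
qed

lemma coef_cnj: "coef (cnj s) q = cnj (coef s q)"
proof -
  have "cnj (of_nat q powr (s - 1)) = of_nat q powr (cnj s - 1)"
    using cnj_powr[of "of_nat q" "s - 1"] by simp
  then show ?thesis unfolding coef_def by simp
qed

lemma totient_prod_primes:
  assumes "finite B" "\<forall>p\<in>B. prime p"
  shows "real (totient (\<Prod>B)) = (\<Prod>p\<in>B. real p - 1)"
  using assms
proof (induction B rule: finite_induct)
  case empty then show ?case by simp
next
  case (insert p B)
  have "coprime p (\<Prod>B)" using insert coprime_prime_prod_primes by auto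
  then have "totient (\<Prod>(insert p B)) = totient p * totient (\<Prod>B)"
    using insert by (simp add: totient_mult_coprime)
  moreover have "p \<ge> 1" using insert prime_ge_1_nat by auto
  then have "real (totient p) = real p - 1" using insert
    by (simp add: totient_prime of_nat_diff)
  ultimately show ?case using insert by simp
qed

lemma abs_mu_prod_primes:
  assumes "finite B" "\<forall>p\<in>B. prime p"
  shows "\<bar>real_of_int (mu (\<Prod>B))\<bar> = 1"
  using squarefree_prod_primes[OF assms] prod_primes_pos[OF assms(2)] unfolding mu_def by simp

lemma coef_abs_prod_primes_eq:
  assumes "finite B" "\<forall>p\<in>B. prime p"
  shows "coef_abs \<sigma> (\<Prod>B) = (\<Prod>p\<in>B. 1 / (real p powr (\<sigma> - 1) * (real p - 1)))"
proof -
  have "real (\<Prod>B) powr (\<sigma> - 1) = (\<Prod>p\<in>B. real p powr (\<sigma> - 1))"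
    by (simp add: prod_powr_distrib)
  then show ?thesis unfolding coef_abs_def using abs_mu_prod_primes[OF assms] totient_prod_primes[OF assms]
    by (simp add: prod_dividef prod.distrib)
qed

lemma coef_abs_prime:
  assumes "prime p"
  shows "coef_abs \<sigma> p = 1 / (real p powr (\<sigma> - 1) * (real p - 1))"
  using coef_abs_prod_primes_eq[of "{p}" \<sigma>] assms by simp

lemma coef_abs_nonsquarefree: "\<not> squarefree q \<Longrightarrow> coef_abs \<sigma> q = 0"
  unfolding coef_abs_def mu_def by simp

lemma coef_abs_prod_primes:
  assumes "finite B" "\<forall>p\<in>B. prime p"
  shows "coef_abs \<tau> (\<Prod>B) = (\<Prod>p\<in>B. coef_abs \<tau> p)"
  using coef_abs_prod_primes_eq[OF assms] assms(2) by (simp add: coef_abs_prime)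

section \<open>Euler products\<close>

lemma sum_abs_le_euler_product:
  fixes G :: "nat \<Rightarrow> real" and x :: "nat \<Rightarrow> real"
  assumes x0: "\<And>p. prime p \<Longrightarrow> x p \<ge> 0"
    and Gsqf: "\<And>B. finite B \<Longrightarrow> \<forall>p\<in>B. prime p \<Longrightarrow> \<bar>G (\<Prod>B)\<bar> \<le> (\<Prod>p\<in>B. x p)"
    and Gnon: "\<And>q. q > 0 \<Longrightarrow> \<not> squarefree q \<Longrightarrow> G q = 0"
  shows "(\<Sum>q\<in>{1..N}. \<bar>G q\<bar>) \<le> (\<Prod>p\<in>primes_le N. 1 + x p)"
proof -
  let ?I = "(\<lambda>B. \<Prod>B) ` Pow (primes_le N)"
  have "(\<Sum>q\<in>{1..N}. \<bar>G q\<bar>) = (\<Sum>q\<in>{q\<in>{1..N}. squarefree q}. \<bar>G q\<bar>)"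
    by (rule sum.mono_neutral_right) (auto simp: Gnon)
  also have "\<dots> \<le> (\<Sum>q\<in>?I. \<bar>G q\<bar>)"
  proof (rule sum_mono2)
    show "{q \<in> {1..N}. squarefree q} \<subseteq> ?I"
    proof
      fix q assume "q \<in> {q \<in> {1..N}. squarefree q}"
      then show "q \<in> ?I" using squarefree_in_prod_Pow_primes_le[of q N] by auto
    qed
  qed auto
  also have "\<dots> = (\<Sum>B\<in>Pow (primes_le N). \<bar>G (\<Prod>B)\<bar>)" by (rule sum_prod_Pow_primes_le)
  also have "\<dots> \<le> (\<Sum>B\<in>Pow (primes_le N). \<Prod>p\<in>B. x p)"
  proof (rule sum_mono)
    fix B assume "B \<in> Pow (primes_le N)"
    then have "finite B" using finite_primes_le[of N] finite_subset by blast
    moreover have "\<forall>p\<in>B. prime p" using \<open>B \<in> Pow (primes_le N)\<close> primes_le_prime by blast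
    ultimately
    show "\<bar>G (\<Prod>B)\<bar> \<le> (\<Prod>p\<in>B. x p)" by (rule Gsqf)
  qed
  also have "\<dots> = (\<Prod>p\<in>primes_le N. x p + 1)" by (simp add: prod_add)
  finally show ?thesis by (simp add: add.commute)
qed

lemma sum_lessThan_Suc_eq: "(\<Sum>q<N. f (Suc q)) = (\<Sum>q\<in>{1..N}. f q)"
  using sum.atLeast1_atMost_eq[of f N] by (simp add: atLeastAtMost_def)

lemma summable_abs_squarefree_supported:
  fixes G :: "nat \<Rightarrow> real" and x :: "nat \<Rightarrow> real"
  assumes x0: "\<And>p. prime p \<Longrightarrow> x p \<ge> 0"
    and Gsqf: "\<And>B. finite B \<Longrightarrow> \<forall>p\<in>B. prime p \<Longrightarrow> \<bar>G (\<Prod>B)\<bar> \<le> (\<Prod>p\<in>B. x p)"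
    and Gnon: "\<And>q. q > 0 \<Longrightarrow> \<not> squarefree q \<Longrightarrow> G q = 0"
    and X: "\<And>N. (\<Sum>p\<in>primes_le N. x p) \<le> X"
  shows "summable (\<lambda>q. \<bar>G (Suc q)\<bar>)"
proof (rule summableI_nonneg_bounded)
  fix N
  have "(\<Sum>q<N. \<bar>G (Suc q)\<bar>) = (\<Sum>q\<in>{1..N}. \<bar>G q\<bar>)" by (rule sum_lessThan_Suc_eq)
  also have "\<dots> \<le> (\<Prod>p\<in>primes_le N. 1 + x p)" by (rule sum_abs_le_euler_product[OF x0 Gsqf Gnon])
  also have "\<dots> \<le> exp (\<Sum>p\<in>primes_le N. x p)" by (rule prod_le_exp_sum) (auto simp: primes_le_def x0)
  also have "\<dots> \<le> exp X" using X by simp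
  finally show "(\<Sum>q<N. \<bar>G (Suc q)\<bar>) \<le> exp X" .
qed simp

lemma sum_abs_le_suminf_tail:
  fixes G :: "nat \<Rightarrow> real"
  assumes summ: "summable (\<lambda>q. \<bar>G (Suc q)\<bar>)" and F: "finite F" "\<forall>q\<in>F. q > N"
  shows "(\<Sum>q\<in>F. \<bar>G q\<bar>) \<le> (\<Sum>k. \<bar>G (Suc (k + N))\<bar>)"
proof -
  let ?h = "\<lambda>q. q - Suc N"
  have inj: "inj_on ?h F"
  proof (rule inj_onI)
    fix a b assume ab: "a \<in> F" "b \<in> F" "a - Suc N = b - Suc N"
    then have "a > N" "b > N" using F by auto
    then show "a = b" using ab(3) by arith
  qed
  have "(\<Sum>k\<in>?h ` F. \<bar>G (Suc (k + N))\<bar>) = (\<Sum>q\<in>F. \<bar>G (Suc (q - Suc N + N))\<bar>)"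
    by (simp add: sum.reindex[OF inj])
  also have "\<dots> = (\<Sum>q\<in>F. \<bar>G q\<bar>)"
  proof (rule sum.cong[OF refl])
    fix x assume "x \<in> F"
    then have "x > N" using F by auto
    then have "Suc (x - Suc N + N) = x" by arith
    then show "\<bar>G (Suc (x - Suc N + N))\<bar> = \<bar>G x\<bar>" by simp
  qed
  finally have "(\<Sum>q\<in>F. \<bar>G q\<bar>) = (\<Sum>k\<in>?h ` F. \<bar>G (Suc (k + N))\<bar>)" by simp
  also have "\<dots> \<le> (\<Sum>k. \<bar>G (Suc (k + N))\<bar>)"
  proof (rule sum_le_suminf)
    show "summable (\<lambda>k. \<bar>G (Suc (k + N))\<bar>)"
      using summ summable_iff_shift[of "\<lambda>q. \<bar>G (Suc q)\<bar>" N] by simp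
  next
    show "finite (?h ` F)" using F by simp
  next
    fix n show "0 \<le> \<bar>G (Suc (n + N))\<bar>" by simp
  qed
  finally show ?thesis .
qed

lemma euler_product_eq_partial_sum_plus_rest:
  fixes G :: "nat \<Rightarrow> real" and g :: "nat \<Rightarrow> real"
  assumes Gsqf: "\<And>B. finite B \<Longrightarrow> \<forall>p\<in>B. prime p \<Longrightarrow> G (\<Prod>B) = (\<Prod>p\<in>B. g p)"
    and Gnon: "\<And>q. q > 0 \<Longrightarrow> \<not> squarefree q \<Longrightarrow> G q = 0"
  shows "(\<Prod>p\<in>primes_le N. 1 + g p)
       = (\<Sum>q<N. G (Suc q)) + (\<Sum>q\<in>(\<lambda>B. \<Prod>B) ` Pow (primes_le N) - {1..N}. G q)"
proof -
  let ?I = "(\<lambda>B. \<Prod>B) ` Pow (primes_le N)"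
  have "(\<Prod>p\<in>primes_le N. 1 + g p) = (\<Sum>B\<in>Pow (primes_le N). \<Prod>p\<in>B. g p)"
    using prod_add[of "primes_le N" g "\<lambda>_. 1"] by (simp add: add.commute)
  also have "\<dots> = (\<Sum>B\<in>Pow (primes_le N). G (\<Prod>B))"
  proof (rule sum.cong[OF refl])
    fix B assume "B \<in> Pow (primes_le N)"
    then show "(\<Prod>p\<in>B. g p) = G (\<Prod>B)" using Gsqf[OF subset_primes_le] by simp
  qed
  also have "\<dots> = (\<Sum>q\<in>?I. G q)" by (rule sum_prod_Pow_primes_le[symmetric])
  also have "\<dots> = (\<Sum>q\<in>?I \<inter> {1..N}. G q) + (\<Sum>q\<in>?I - {1..N}. G q)"
    by (rule sum.Int_Diff) simp
  also have "(\<Sum>q\<in>?I \<inter> {1..N}. G q) = (\<Sum>q\<in>{1..N}. G q)"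
  proof (rule sum.mono_neutral_left)
    show "\<forall>q\<in>{1..N} - ?I \<inter> {1..N}. G q = 0"
    proof
      fix q assume q: "q \<in> {1..N} - ?I \<inter> {1..N}"
      then have "\<not> squarefree q" using squarefree_in_prod_Pow_primes_le[of q N] by auto
      then show "G q = 0" using Gnon q by simp
    qed
  qed auto
  finally show ?thesis by (simp add: sum_lessThan_Suc_eq)
qed

lemma tendsto_euler_product:
  fixes G :: "nat \<Rightarrow> real" and g :: "nat \<Rightarrow> real"
  assumes Gsqf: "\<And>B. finite B \<Longrightarrow> \<forall>p\<in>B. prime p \<Longrightarrow> G (\<Prod>B) = (\<Prod>p\<in>B. g p)"
    and Gnon: "\<And>q. q > 0 \<Longrightarrow> \<not> squarefree q \<Longrightarrow> G q = 0"
    and summ: "summable (\<lambda>q. \<bar>G (Suc q)\<bar>)"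
  shows "(\<lambda>N. \<Prod>p\<in>primes_le N. 1 + g p) \<longlonglongrightarrow> (\<Sum>q. G (Suc q))"
proof -
  define T where "T N = (\<Sum>k. \<bar>G (Suc (k + N))\<bar>)" for N
  have T0: "T \<longlonglongrightarrow> 0" unfolding T_def using suminf_exist_split2[OF summ] .
  have summ_T: "summable (\<lambda>k. \<bar>G (Suc (k + N))\<bar>)" for N
    using summ summable_iff_shift[of "\<lambda>q. \<bar>G (Suc q)\<bar>" N] by simp
  have bound: "\<bar>(\<Prod>p\<in>primes_le N. 1 + g p) - (\<Sum>q. G (Suc q))\<bar> \<le> 2 * T N" for N
  proof -
    let ?R = "(\<lambda>B. \<Prod>B) ` Pow (primes_le N) - {1..N}"
    have "(\<Sum>q. G (Suc q)) = (\<Sum>k. G (Suc (k + N))) + (\<Sum>q<N. G (Suc q))"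
      using suminf_split_initial_segment[OF summable_rabs_cancel[OF summ], of N] by simp
    moreover have "\<bar>\<Sum>k. G (Suc (k + N))\<bar> \<le> T N"
      unfolding T_def using summable_rabs[OF summ_T] by simp
    moreover have "\<bar>\<Sum>q\<in>?R. G q\<bar> \<le> T N"
    proof -
      have "\<forall>q\<in>?R. N < q"
      proof
        fix q assume "q \<in> ?R"
        then show "N < q" using prod_Pow_primes_le_pos[of q N] by auto
      qed
      then have "(\<Sum>q\<in>?R. \<bar>G q\<bar>) \<le> T N"
        unfolding T_def by (intro sum_abs_le_suminf_tail[OF summ]) simp_all
      then show ?thesis using sum_abs[of G ?R] by linarith
    qed
    ultimately show ?thesis
      using euler_product_eq_partial_sum_plus_rest[OF Gsqf Gnon, of N] by linarith
  qed
  have "(\<lambda>N. (\<Prod>p\<in>primes_le N. 1 + g p) - (\<Sum>q. G (Suc q))) \<longlonglongrightarrow> 0"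
  proof (rule Lim_null_comparison)
    show "(\<lambda>N. 2 * T N) \<longlonglongrightarrow> 0" using tendsto_mult_right_zero[OF T0] by simp
  qed (use bound in simp)
  then show ?thesis by (simp add: LIM_zero_iff)
qed

definition spectrum_term :: "nat \<Rightarrow> real \<Rightarrow> nat \<Rightarrow> real" where
  "spectrum_term m \<sigma> q = (coef_abs \<sigma> q)^2 * (\<Prod>p\<in>prime_factors q. ramanujan_sum_prime_val m p)"

lemma spectrum_series_term:
  assumes "q > 0"
  shows "complex_of_real ((cmod (coef s q))\<^sup>2) * ramanujan_sum q m = of_real (spectrum_term m (Re s) q)"
proof (cases "squarefree q")
  case True
  then show ?thesis using ramanujan_sum_squarefree[OF assms True, of m]
    by (simp add: spectrum_term_def norm_coef)
qed (simp add: spectrum_term_def norm_coef coef_abs_nonsquarefree)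

lemma spectrum_term_prod_primes:
  assumes "finite B" "\<forall>p\<in>B. prime p"
  shows "spectrum_term m \<sigma> (\<Prod>B) = (\<Prod>p\<in>B. (coef_abs \<sigma> p)^2 * ramanujan_sum_prime_val m p)"
  by (simp add: spectrum_term_def coef_abs_prod_primes[OF assms] prime_factors_prod_primes[OF assms]
      prod_power_distrib prod.distrib)

lemma spectrum_term_nonsquarefree: "\<not> squarefree q \<Longrightarrow> spectrum_term m \<sigma> q = 0"
  by (simp add: spectrum_term_def coef_abs_nonsquarefree)

lemma coef_abs_prime_sq:
  assumes "prime p"
  shows "(coef_abs \<sigma> p)^2 = 1 / (real p powr (2*\<sigma> - 2) * (real p - 1)^2)"
proof -
  have p: "real p > 0" using assms prime_gt_0_nat by simp
  have "(real p powr (\<sigma> - 1))^2 = real p powr (2*\<sigma> - 2)"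
    using powr_power[of "real p" "\<sigma> - 1" 2] p by (simp add: algebra_simps)
  then show ?thesis using coef_abs_prime[OF assms, of \<sigma>] by (simp add: power_mult_distrib power_divide)
qed

lemma divide_mult_square_cancel:
  assumes "P > 0" "d > (0::real)"
  shows "d / (P * d^2) = 1 / (P * d)"
  using assms by (simp add: power2_eq_square)

lemma euler_factor_eq:
  assumes "prime p"
  shows "1 + (coef_abs \<sigma> p)^2 * ramanujan_sum_prime_val m p = euler_factor m \<sigma> p"
proof -
  have p2: "real p \<ge> 2" using prime_ge_2_nat[OF assms] by simp
  have P: "real p powr (2*\<sigma> - 2) > 0" using p2 by simp
  have d: "real p - 1 > 0" using p2 by simp
  show ?thesis
  proof (cases "p dvd m")
    case True
    then show ?thesis using assms divide_mult_square_cancel[OF P d]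
      unfolding coef_abs_prime_sq[OF assms] euler_factor_def ramanujan_sum_prime_val_def by simp
  next
    case False
    then show ?thesis using assms
      unfolding coef_abs_prime_sq[OF assms] euler_factor_def ramanujan_sum_prime_val_def by simp
  qed
qed

lemma abs_local_factor_le:
  assumes "prime p" "\<sigma> \<ge> 1"
  shows "\<bar>(coef_abs \<sigma> p)^2 * ramanujan_sum_prime_val m p\<bar> \<le> (if p dvd m then 1 else 0) + 1 / (real p - 1)^2"
proof -
  have p2: "real p \<ge> 2" using prime_ge_2_nat[OF assms(1)] by simp
  define P where "P = real p powr (2*\<sigma> - 2)"
  have P1: "P \<ge> 1" using p2 assms(2) by (simp add: P_def ge_one_powr_ge_zero)
  have d: "real p - 1 > 0" using p2 by simp
  have A: "(coef_abs \<sigma> p)^2 = 1 / (P * (real p - 1)^2)" using coef_abs_prime_sq[OF assms(1)] by (simp add: P_def)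
  show ?thesis
  proof (cases "p dvd m")
    case True
    have "\<bar>(coef_abs \<sigma> p)^2 * ramanujan_sum_prime_val m p\<bar> = \<bar>(real p - 1) / (P * (real p - 1)^2)\<bar>"
      using True unfolding A ramanujan_sum_prime_val_def by simp
    also have "\<dots> = 1 / (P * (real p - 1))" using divide_mult_square_cancel[of P "real p - 1"] P1 d by simp
    also have "\<dots> \<le> 1"
    proof -
      have "P * (real p - 1) \<ge> 1 * 1" using P1 p2 by (intro mult_mono) auto
      then show ?thesis by simp
    qed
    finally have "\<bar>(coef_abs \<sigma> p)^2 * ramanujan_sum_prime_val m p\<bar> \<le> 1" .
    moreover have "1 / (real p - 1)^2 \<ge> 0" by simp
    moreover have "(if p dvd m then 1 else 0) = (1::real)" using True by simp
    ultimately show ?thesis by linarith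
  next
    case False
    have "\<bar>(coef_abs \<sigma> p)^2 * ramanujan_sum_prime_val m p\<bar> = 1 / (P * (real p - 1)^2)"
      using False p2 P1 unfolding A ramanujan_sum_prime_val_def by simp
    also have "\<dots> \<le> 1 / (real p - 1)^2"
      using P1 p2 by (intro divide_left_mono) (auto simp: mult_le_cancel_right1)
    finally show ?thesis using False by simp
  qed
qed

lemma sum_inverse_squares_le: "N \<ge> 1 \<Longrightarrow> (\<Sum>k\<in>{1..N}. 1 / (real k)^2) \<le> 2 - 1 / real N"
proof (induction N rule: dec_induct)
  case base then show ?case by simp
next
  case (step n)
  have "(\<Sum>k\<in>{1..Suc n}. 1 / (real k)^2) = (\<Sum>k\<in>{1..n}. 1 / (real k)^2) + 1 / (real (Suc n))^2"
    by simp
  also have "\<dots> \<le> 2 - 1 / real n + 1 / (real (Suc n))^2" using step by simp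
  also have "\<dots> \<le> 2 - 1 / real (Suc n)"
  proof -
    have n: "real n \<ge> 1" using step by simp
    have e: "1 / real n - 1 / real (Suc n) = 1 / (real n * real (Suc n))"
      using n by (simp add: field_simps)
    have "1 / (real (Suc n))^2 \<le> 1 / (real n * real (Suc n))"
      using n by (intro divide_left_mono) (auto simp: power2_eq_square)
    then have "1 / (real (Suc n))^2 \<le> 1 / real n - 1 / real (Suc n)" using e by simp
    then show ?thesis by simp
  qed
  finally show ?case .
qed

lemma sum_primes_inverse_squares_le: "(\<Sum>p\<in>primes_le N. 1 / (real p - 1)^2) \<le> 2"
proof -
  let ?h = "\<lambda>p. p - 1"
  have inj: "inj_on ?h (primes_le N)"
  proof (rule inj_onI)
    fix a b assume "a \<in> primes_le N" "b \<in> primes_le N" "a - 1 = b - 1"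
    then have "a \<ge> 2" "b \<ge> 2" "a - 1 = b - 1" by (auto simp: primes_le_def prime_ge_2_nat)
    then show "a = b" by arith
  qed
  have "(\<Sum>p\<in>primes_le N. 1 / (real p - 1)^2) = (\<Sum>p\<in>primes_le N. 1 / (real (p - 1))^2)"
  proof (rule sum.cong[OF refl])
    fix p assume "p \<in> primes_le N"
    then have "p \<ge> 1" by (auto simp: primes_le_def dest: prime_gt_0_nat)
    then show "1 / (real p - 1)^2 = 1 / (real (p - 1))^2" by (simp add: of_nat_diff)
  qed
  also have "\<dots> = (\<Sum>k\<in>?h ` primes_le N. 1 / (real k)^2)"
    using sum.reindex[OF inj, of "\<lambda>k. 1 / (real k)^2"] by (simp add: o_def)
  also have "\<dots> \<le> (\<Sum>k\<in>{1..N}. 1 / (real k)^2)"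
  proof (rule sum_mono2)
    show "?h ` primes_le N \<subseteq> {1..N}"
    proof
      fix k assume "k \<in> ?h ` primes_le N"
      then obtain p where "p \<in> primes_le N" "k = p - 1" by blast
      then have "p \<ge> 2" "p \<le> N" "k = p - 1" by (auto simp: primes_le_def prime_ge_2_nat)
      then show "k \<in> {1..N}" by auto
    qed
  qed auto
  also have "\<dots> \<le> 2"
  proof (cases "N \<ge> 1")
    case True
    have "1 / real N \<ge> 0" by simp
    then show ?thesis using sum_inverse_squares_le[OF True] by linarith
  next
    case False then show ?thesis by simp
  qed
  finally show ?thesis .
qed

lemma sum_primes_le_dvd_le_card: "m > 0 \<Longrightarrow> (\<Sum>p\<in>primes_le N. (if p dvd m then 1 else 0::real)) \<le> real (card (prime_factors m))"
proof -
  assume m: "m > 0"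
  have "(\<Sum>p\<in>primes_le N. (if p dvd m then 1 else 0::real)) = real (card {p\<in>primes_le N. p dvd m})"
  proof -
    have "{p\<in>primes_le N. p dvd m} = primes_le N \<inter> {p. p dvd m}" by blast
    then show ?thesis by (simp add: sum.If_cases)
  qed
  also have "card {p\<in>primes_le N. p dvd m} \<le> card (prime_factors m)"
  proof (rule card_mono)
    show "{p \<in> primes_le N. p dvd m} \<subseteq> prime_factors m" using m by (auto simp: primes_le_def in_prime_factors_iff)
  qed simp
  finally show ?thesis by simp
qed

lemma summable_spectrum_term:
  assumes "\<sigma> \<ge> 1" "m > 0"
  shows "summable (\<lambda>q. \<bar>spectrum_term m \<sigma> (Suc q)\<bar>)"
proof -
  define x where "x p = (if p dvd m then 1 else 0) + 1 / (real p - 1)^2" for p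
  show ?thesis
  proof (rule summable_abs_squarefree_supported[of x])
    fix B :: "nat set" assume B: "finite B" "\<forall>p\<in>B. prime p"
    have "\<bar>spectrum_term m \<sigma> (\<Prod>B)\<bar> = (\<Prod>p\<in>B. \<bar>(coef_abs \<sigma> p)^2 * ramanujan_sum_prime_val m p\<bar>)"
      using spectrum_term_prod_primes[OF B] by (simp add: abs_prod)
    also have "\<dots> \<le> (\<Prod>p\<in>B. x p)"
      by (rule prod_mono) (use B abs_local_factor_le assms(1) in \<open>auto simp: x_def\<close>)
    finally show "\<bar>spectrum_term m \<sigma> (\<Prod>B)\<bar> \<le> (\<Prod>p\<in>B. x p)" .
  next
    fix N
    have "(\<Sum>p\<in>primes_le N. x p)
        = (\<Sum>p\<in>primes_le N. (if p dvd m then 1 else 0::real)) + (\<Sum>p\<in>primes_le N. 1 / (real p - 1)^2)"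
      unfolding x_def by (rule sum.distrib)
    then show "(\<Sum>p\<in>primes_le N. x p) \<le> real (card (prime_factors m)) + 2"
      using sum_primes_le_dvd_le_card[OF assms(2), of N] sum_primes_inverse_squares_le[of N] by linarith
  qed (auto simp: x_def spectrum_term_nonsquarefree)
qed

lemma spectrum_eq_suminf:
  assumes "Re s \<ge> 1" "m > 0"
  shows "spectrum m s = of_real (\<Sum>q. spectrum_term m (Re s) (Suc q))"
proof -
  have S: "summable (\<lambda>q. spectrum_term m (Re s) (Suc q))"
    by (rule summable_rabs_cancel[OF summable_spectrum_term[OF assms]])
  have "spectrum m s = (\<Sum>q. complex_of_real (spectrum_term m (Re s) (Suc q)))"
    unfolding spectrum_def by (subst spectrum_series_term) auto
  also have "\<dots> = of_real (\<Sum>q. spectrum_term m (Re s) (Suc q))" by (rule suminf_of_real[OF S, symmetric])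
  finally show ?thesis .
qed

lemma tendsto_euler_product_spectrum:
  assumes "\<sigma> \<ge> 1" "m > 0"
  shows "(\<lambda>N. \<Prod>p\<in>primes_le N. euler_factor m \<sigma> p) \<longlonglongrightarrow> (\<Sum>q. spectrum_term m \<sigma> (Suc q))"
proof -
  have "(\<lambda>N. \<Prod>p\<in>primes_le N. 1 + (coef_abs \<sigma> p)^2 * ramanujan_sum_prime_val m p) \<longlonglongrightarrow> (\<Sum>q. spectrum_term m \<sigma> (Suc q))"
  proof (rule tendsto_euler_product)
    fix B :: "nat set" assume "finite B" "\<forall>p\<in>B. prime p"
    then show "spectrum_term m \<sigma> (\<Prod>B) = (\<Prod>p\<in>B. (coef_abs \<sigma> p)^2 * ramanujan_sum_prime_val m p)" by (rule spectrum_term_prod_primes)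
  next
    fix q :: nat assume "\<not> squarefree q" then show "spectrum_term m \<sigma> q = 0" by (rule spectrum_term_nonsquarefree)
  next
    show "summable (\<lambda>q. \<bar>spectrum_term m \<sigma> (Suc q)\<bar>)" by (rule summable_spectrum_term[OF assms])
  qed
  moreover have "(\<Prod>p\<in>primes_le N. 1 + (coef_abs \<sigma> p)^2 * ramanujan_sum_prime_val m p) = (\<Prod>p\<in>primes_le N. euler_factor m \<sigma> p)" for N
    by (rule prod.cong[OF refl]) (simp add: euler_factor_eq primes_le_def)
  ultimately show ?thesis by simp
qed

section \<open>Bounds on the Euler product\<close>

lemma prod_one_minus_inverse_squares: "N \<ge> 1 \<Longrightarrow> (\<Prod>k\<in>{2..N}. 1 - 1 / (real k)^2) = (real N + 1) / (2 * real N)"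
proof (induction N rule: dec_induct)
  case base then show ?case by simp
next
  case (step n)
  have "{2..Suc n} = insert (Suc n) {2..n}" using step by auto
  then have "(\<Prod>k\<in>{2..Suc n}. 1 - 1 / (real k)^2) = (1 - 1 / (real (Suc n))^2) * (\<Prod>k\<in>{2..n}. 1 - 1 / (real k)^2)"
    by simp
  also have "\<dots> = (1 - 1 / (real n + 1)^2) * ((real n + 1) / (2 * real n))" using step by simp
  also have "\<dots> = (real (Suc n) + 1) / (2 * real (Suc n))"
  proof -
    have n: "real n \<ge> 1" using step by simp
    then show ?thesis by (simp add: divide_simps power2_eq_square) (simp add: algebra_simps)
  qed
  finally show ?case .
qed

lemma prod_one_minus_inverse_squares_ge_half: "(\<Prod>k\<in>{2..N}. 1 - 1 / (real k)^2) \<ge> 1/2"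
proof (cases "N \<ge> 1")
  case True
  have "(real N + 1) / (2 * real N) \<ge> 1/2" using True by (simp add: field_simps)
  then show ?thesis using prod_one_minus_inverse_squares[OF True] by simp
next
  case False then show ?thesis by simp
qed

lemma euler_factor_odd_prime_ge:
  assumes "prime p" "p \<noteq> 2" "\<sigma> \<ge> 1"
  shows "euler_factor m \<sigma> p \<ge> 1 - 1 / (real p - 1)^2" "1 - 1 / (real p - 1)^2 \<ge> 0"
proof -
  have p3: "real p \<ge> 3" using prime_ge_2_nat[OF assms(1)] assms(2) by simp
  have P1: "real p powr (2*\<sigma> - 2) \<ge> 1" using p3 assms(3) by (simp add: ge_one_powr_ge_zero)
  have "real p - 1 \<ge> 2" using p3 by simp
  then have "2^2 \<le> (real p - 1)^2" by (intro power_mono) auto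
  then have d: "(real p - 1)^2 \<ge> 4" by simp
  show "1 - 1 / (real p - 1)^2 \<ge> 0" using d by (simp add: divide_le_eq)
  show "euler_factor m \<sigma> p \<ge> 1 - 1 / (real p - 1)^2"
  proof (cases "p dvd m")
    case True
    have "1 / (real p powr (2 * \<sigma> - 2) * (real p - 1)) \<ge> 0" using p3 by simp
    then have "euler_factor m \<sigma> p \<ge> 1" using True assms(1) by (simp add: euler_factor_def)
    moreover have "1 / (real p - 1)^2 \<ge> 0" by simp
    ultimately show ?thesis by linarith
  next
    case False
    have pos: "(real p - 1)^2 > 0" using p3 by simp
    have "1 / (real p powr (2 * \<sigma> - 2) * (real p - 1)^2) \<le> 1 / (real p - 1)^2"
      using P1 pos p3 by (intro divide_left_mono) (auto simp: mult_le_cancel_right1 intro!: mult_pos_pos)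
    then show ?thesis using False assms(1) by (simp add: euler_factor_def)
  qed
qed

lemma euler_factor_odd_prime_le:
  assumes "prime p" "p \<noteq> 2" "\<sigma> \<ge> 1"
  shows "euler_factor m \<sigma> p \<le> (if p dvd m then 2 else 1)"
proof -
  have p3: "real p \<ge> 3" using prime_ge_2_nat[OF assms(1)] assms(2) by simp
  have P1: "real p powr (2*\<sigma> - 2) \<ge> 1" using p3 assms(3) by (simp add: ge_one_powr_ge_zero)
  show ?thesis
  proof (cases "p dvd m")
    case True
    have "real p powr (2 * \<sigma> - 2) * (real p - 1) \<ge> 1 * 1" using P1 p3 by (intro mult_mono) auto
    then have "1 / (real p powr (2 * \<sigma> - 2) * (real p - 1)) \<le> 1" by simp
    then show ?thesis using True assms(1) by (simp add: euler_factor_def)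
  next
    case False
    have "1 / (real p powr (2 * \<sigma> - 2) * (real p - 1)^2) \<ge> 0" using p3 by simp
    then show ?thesis using False assms(1) by (simp add: euler_factor_def)
  qed
qed

lemma euler_factor_2:
  assumes "\<sigma> \<ge> 1"
  shows "euler_factor m \<sigma> 2 \<ge> 0" "even m \<Longrightarrow> euler_factor m \<sigma> 2 \<ge> 1"
    "odd m \<Longrightarrow> euler_factor m \<sigma> 2 = 1 - 1 / 2 powr (2*\<sigma> - 2)"
    "\<sigma> > 1 \<Longrightarrow> euler_factor m \<sigma> 2 > 0"
proof -
  have P1: "(2::real) powr (2*\<sigma> - 2) \<ge> 1" using assms by (simp add: ge_one_powr_ge_zero)
  show "odd m \<Longrightarrow> euler_factor m \<sigma> 2 = 1 - 1 / 2 powr (2*\<sigma> - 2)"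
    by (simp add: euler_factor_def)
  show "even m \<Longrightarrow> euler_factor m \<sigma> 2 \<ge> 1" by (simp add: euler_factor_def)
  show "euler_factor m \<sigma> 2 \<ge> 0" using P1 by (simp add: euler_factor_def)
  show "\<sigma> > 1 \<Longrightarrow> euler_factor m \<sigma> 2 > 0"
  proof -
    assume s: "\<sigma> > 1"
    have "(2::real) powr 0 < 2 powr (2*\<sigma> - 2)" using s by (intro powr_less_mono) auto
    then have P: "(2::real) powr (2*\<sigma> - 2) > 1" by simp
    then have "1 / (2::real) powr (2*\<sigma> - 2) < 1" by simp
    moreover have "1 / (2::real) powr (2*\<sigma> - 2) \<ge> 0" by simp
    ultimately show ?thesis unfolding euler_factor_def by (cases "2 dvd m") (auto intro: add_pos_nonneg)
  qed
qed

lemma euler_factor_nonneg: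
  assumes "\<sigma> \<ge> 1" "prime p"
  shows "euler_factor m \<sigma> p \<ge> 0"
proof (cases "p = 2")
  case True
  then show ?thesis using euler_factor_2(1)[OF assms(1)] by simp
next
  case False
  then show ?thesis
    using euler_factor_odd_prime_ge(1)[OF assms(2) False assms(1), of m]
      euler_factor_odd_prime_ge(2)[OF assms(2) False assms(1)] by linarith
qed

lemma prod_odd_primes_ge_half: "(\<Prod>p\<in>primes_le N - {2}. 1 - 1 / (real p - 1)^2) \<ge> 1/2"
proof -
  let ?A = "primes_le N - {2}"
  let ?h = "\<lambda>p. p - 1"
  let ?f = "\<lambda>k. 1 - 1 / (real k)^2"
  have inj: "inj_on ?h ?A"
  proof (rule inj_onI)
    fix a b assume "a \<in> ?A" "b \<in> ?A" "a - 1 = b - 1"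
    then have "a \<ge> 2" "b \<ge> 2" "a - 1 = b - 1" by (auto simp: primes_le_def prime_ge_2_nat)
    then show "a = b" by arith
  qed
  have "(\<Prod>p\<in>?A. 1 - 1 / (real p - 1)^2) = (\<Prod>p\<in>?A. ?f (p - 1))"
  proof (rule prod.cong[OF refl])
    fix p assume "p \<in> ?A"
    then have "p \<ge> 1" by (auto simp: primes_le_def dest: prime_gt_0_nat)
    then show "1 - 1 / (real p - 1)^2 = ?f (p - 1)" by (simp add: of_nat_diff)
  qed
  also have "\<dots> = (\<Prod>k\<in>?h ` ?A. ?f k)"
    using prod.reindex[OF inj, of ?f] by (simp add: o_def)
  finally have E: "(\<Prod>p\<in>?A. 1 - 1 / (real p - 1)^2) = (\<Prod>k\<in>?h ` ?A. ?f k)" .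
  have sub: "?h ` ?A \<subseteq> {2..N}"
  proof
    fix k assume "k \<in> ?h ` ?A"
    then obtain p where "p \<in> ?A" "k = p - 1" by blast
    then have "p \<ge> 2" "p \<noteq> 2" "p \<le> N" "k = p - 1" by (auto simp: primes_le_def prime_ge_2_nat)
    then show "k \<in> {2..N}" by auto
  qed
  have f01: "0 \<le> ?f k \<and> ?f k \<le> 1" if "k \<in> {2..N}" for k
  proof -
    have "real k \<ge> 2" using that by simp
    then have "1^2 \<le> (real k)^2" by (intro power_mono) auto
    then have "(real k)^2 \<ge> 1" by simp
    then show ?thesis by (simp add: divide_le_eq)
  qed
  have "(\<Prod>k\<in>{2..N}. ?f k) = (\<Prod>k\<in>{2..N} - ?h ` ?A. ?f k) * (\<Prod>k\<in>?h ` ?A. ?f k)"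
    by (rule prod.subset_diff[OF sub]) simp
  also have "\<dots> \<le> (\<Prod>k\<in>?h ` ?A. ?f k)"
  proof (rule mult_left_le_one_le)
    show "0 \<le> (\<Prod>k\<in>?h ` ?A. ?f k)" using sub f01 by (intro prod_nonneg) blast
    show "0 \<le> (\<Prod>k\<in>{2..N} - ?h ` ?A. ?f k)" using f01 by (intro prod_nonneg) blast
    show "(\<Prod>k\<in>{2..N} - ?h ` ?A. ?f k) \<le> 1" using f01 by (intro prod_le_1) blast
  qed
  finally show ?thesis using E prod_one_minus_inverse_squares_ge_half[of N] by linarith
qed

lemma euler_product_ge:
  assumes "\<sigma> \<ge> 1"
  shows "(\<Prod>p\<in>primes_le N. euler_factor m \<sigma> p) \<ge> min 1 (euler_factor m \<sigma> 2) / 2"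
proof -
  let ?A = "primes_le N - {2}"
  let ?e = "euler_factor m \<sigma>"
  have split: "(\<Prod>p\<in>primes_le N. ?e p) = (\<Prod>p\<in>?A. ?e p) * (\<Prod>p\<in>primes_le N \<inter> {2}. ?e p)"
  proof -
    have "(\<Prod>p\<in>primes_le N. ?e p) = (\<Prod>p\<in>primes_le N - primes_le N \<inter> {2}. ?e p) * (\<Prod>p\<in>primes_le N \<inter> {2}. ?e p)"
      by (rule prod.subset_diff) auto
    moreover have "primes_le N - primes_le N \<inter> {2} = ?A" by blast
    ultimately show ?thesis by simp
  qed
  have first: "(\<Prod>p\<in>primes_le N \<inter> {2}. ?e p) \<ge> min 1 (?e 2)"
  proof (cases "2 \<in> primes_le N")
    case True then have "primes_le N \<inter> {2} = {2}" by blast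
    then show ?thesis by simp
  next
    case False then have "primes_le N \<inter> {2} = {}" by blast
    then show ?thesis by simp
  qed
  have "(\<Prod>p\<in>?A. ?e p) \<ge> (\<Prod>p\<in>?A. 1 - 1 / (real p - 1)^2)"
  proof (rule prod_mono)
    fix p assume "p \<in> ?A"
    then have "prime p" "p \<noteq> 2" by (auto simp: primes_le_def)
    then show "0 \<le> 1 - 1 / (real p - 1)^2 \<and> 1 - 1 / (real p - 1)^2 \<le> ?e p"
      using euler_factor_odd_prime_ge(1)[of p \<sigma> m] euler_factor_odd_prime_ge(2)[of p \<sigma>] assms by blast
  qed
  then have second: "(\<Prod>p\<in>?A. ?e p) \<ge> 1/2" using prod_odd_primes_ge_half[of N] by linarith
  have m0: "min 1 (?e 2) \<ge> 0" using euler_factor_2(1)[OF assms, of m] by simp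
  have "min 1 (?e 2) / 2 = (1/2) * min 1 (?e 2)" by simp
  also have "\<dots> \<le> (\<Prod>p\<in>?A. ?e p) * (\<Prod>p\<in>primes_le N \<inter> {2}. ?e p)"
    using second first m0 by (intro mult_mono) auto
  finally show ?thesis using split by simp
qed

lemma euler_product_le:
  assumes "\<sigma> \<ge> 1" "N \<ge> 2" "m > 0"
  shows "(\<Prod>p\<in>primes_le N. euler_factor m \<sigma> p) \<le> euler_factor m \<sigma> 2 * 2 ^ card (prime_factors m)"
proof -
  let ?A = "primes_le N - {2}"
  let ?e = "euler_factor m \<sigma>"
  have "2 \<in> primes_le N" using assms(2) by (simp add: primes_le_def)
  then have split: "(\<Prod>p\<in>primes_le N. ?e p) = ?e 2 * (\<Prod>p\<in>?A. ?e p)" by (simp add: prod.remove)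
  have "(\<Prod>p\<in>?A. ?e p) \<le> (\<Prod>p\<in>?A. if p dvd m then 2 else 1)"
  proof (rule prod_mono)
    fix p assume "p \<in> ?A"
    then have "prime p" "p \<noteq> 2" by (auto simp: primes_le_def)
    then show "0 \<le> ?e p \<and> ?e p \<le> (if p dvd m then 2 else 1)"
      using euler_factor_odd_prime_le[of p \<sigma> m] euler_factor_nonneg[of \<sigma> p m] assms(1) by blast
  qed
  also have "(\<Prod>p\<in>?A. if p dvd m then 2 else 1) = (\<Prod>p\<in>{p\<in>?A. p dvd m}. (2::real))"
    by (rule prod.inter_filter[symmetric]) simp
  also have "\<dots> = 2 ^ card {p\<in>?A. p dvd m}" by simp
  also have "\<dots> \<le> 2 ^ card (prime_factors m)"
  proof (rule power_increasing)
    show "card {p\<in>?A. p dvd m} \<le> card (prime_factors m)"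
      by (rule card_mono) (use assms(3) in \<open>auto simp: primes_le_def in_prime_factors_iff\<close>)
  qed simp
  finally have "(\<Prod>p\<in>?A. ?e p) \<le> 2 ^ card (prime_factors m)" .
  then show ?thesis using split euler_factor_2(1)[OF assms(1), of m] by (simp add: mult_left_mono)
qed

definition spectrum_sum :: "nat \<Rightarrow> real \<Rightarrow> real" where "spectrum_sum m \<sigma> = (\<Sum>q. spectrum_term m \<sigma> (Suc q))"

lemma spectrum_sum_ge:
  assumes "\<sigma> \<ge> 1" "m > 0"
  shows "spectrum_sum m \<sigma> \<ge> min 1 (euler_factor m \<sigma> 2) / 2"
  unfolding spectrum_sum_def
  by (rule LIMSEQ_le_const[OF tendsto_euler_product_spectrum[OF assms]]) (use euler_product_ge[OF assms(1)] in blast)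

lemma spectrum_sum_le:
  assumes "\<sigma> \<ge> 1" "m > 0"
  shows "spectrum_sum m \<sigma> \<le> euler_factor m \<sigma> 2 * 2 ^ card (prime_factors m)"
  unfolding spectrum_sum_def
  by (rule LIMSEQ_le_const2[OF tendsto_euler_product_spectrum[OF assms]]) (use euler_product_le[OF assms(1) _ assms(2)] in blast)

lemma spectrum_has_prod:
  assumes "Re s > 1" "m > 0"
  shows "(\<lambda>p. complex_of_real (euler_factor m (Re s) p)) has_prod spectrum m s"
proof -
  define \<sigma> where "\<sigma> = Re s"
  have s1: "\<sigma> \<ge> 1" using assms by (simp add: \<sigma>_def)
  have sp: "spectrum m s = of_real (spectrum_sum m \<sigma>)" using spectrum_eq_suminf[of s m] assms by (simp add: spectrum_sum_def \<sigma>_def)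
  have pos: "spectrum_sum m \<sigma> > 0"
  proof -
    have "euler_factor m \<sigma> 2 > 0" using euler_factor_2(4)[OF s1] assms by (simp add: \<sigma>_def)
    then have "min 1 (euler_factor m \<sigma> 2) / 2 > 0" by simp
    then show ?thesis using spectrum_sum_ge[OF s1 assms(2)] by linarith
  qed
  have eq: "(\<Prod>i\<le>n. euler_factor m \<sigma> i) = (\<Prod>p\<in>primes_le n. euler_factor m \<sigma> p)" for n
  proof (rule prod.mono_neutral_right)
    show "primes_le n \<subseteq> {..n}" by (auto simp: primes_le_def)
    show "\<forall>i\<in>{..n} - primes_le n. euler_factor m \<sigma> i = 1" by (auto simp: primes_le_def euler_factor_def)
  qed simp
  have lim: "(\<lambda>n. \<Prod>i\<le>n. euler_factor m \<sigma> i) \<longlonglongrightarrow> spectrum_sum m \<sigma>"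
    unfolding eq spectrum_sum_def by (rule tendsto_euler_product_spectrum[OF s1 assms(2)])
  have "raw_has_prod (\<lambda>p. complex_of_real (euler_factor m \<sigma> p)) 0 (of_real (spectrum_sum m \<sigma>))"
    unfolding raw_has_prod_def
  proof
    show "(\<lambda>n. \<Prod>i\<le>n. complex_of_real (euler_factor m \<sigma> (i + 0))) \<longlonglongrightarrow> complex_of_real (spectrum_sum m \<sigma>)"
      using tendsto_of_real[OF lim, where 'a=complex] by (simp add: of_real_prod)
    show "complex_of_real (spectrum_sum m \<sigma>) \<noteq> 0" using pos by simp
  qed
  then show ?thesis unfolding has_prod_def sp \<sigma>_def by blast
qed

lemma spectrum_even_ge_half:
  assumes "m \<ge> 2" "even m" "\<sigma> \<ge> 1"
  shows "spectrum m (complex_of_real \<sigma>) \<in> \<real> \<and> Re (spectrum m (complex_of_real \<sigma>)) \<ge> 1 / 2"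
proof -
  have m0: "m > 0" using assms by simp
  have sp: "spectrum m (complex_of_real \<sigma>) = of_real (spectrum_sum m \<sigma>)"
    using spectrum_eq_suminf[of "complex_of_real \<sigma>" m] assms m0 by (simp add: spectrum_sum_def)
  have "euler_factor m \<sigma> 2 \<ge> 1" using euler_factor_2(2)[OF assms(3)] assms(2) by simp
  then have "spectrum_sum m \<sigma> \<ge> 1/2" using spectrum_sum_ge[OF assms(3) m0] by simp
  then show ?thesis using sp by simp
qed

lemma spectrum_odd_tendsto_0:
  assumes "odd m"
  shows "((\<lambda>\<sigma>::real. spectrum m (complex_of_real \<sigma>)) \<longlongrightarrow> 0) (at_right 1)"
proof -
  have m0: "m > 0" using assms by (cases m) auto
  define c where "c = (2::real) ^ card (prime_factors m)"
  have ev: "eventually (\<lambda>\<sigma>. \<sigma> > (1::real)) (at_right 1)"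
    by (simp add: eventually_at_filter)
  have bound: "norm (spectrum m (complex_of_real \<sigma>)) \<le> (1 - 1 / 2 powr (2*\<sigma> - 2)) * c"
    if "\<sigma> > 1" for \<sigma>
  proof -
    have s1: "\<sigma> \<ge> 1" using that by simp
    have sp: "spectrum m (complex_of_real \<sigma>) = of_real (spectrum_sum m \<sigma>)"
      using spectrum_eq_suminf[of "complex_of_real \<sigma>" m] s1 m0 by (simp add: spectrum_sum_def)
    have "min 1 (euler_factor m \<sigma> 2) \<ge> 0" using euler_factor_2(1)[OF s1, of m] by simp
    then have lo: "spectrum_sum m \<sigma> \<ge> 0" using spectrum_sum_ge[OF s1 m0] by linarith
    have up: "spectrum_sum m \<sigma> \<le> (1 - 1 / 2 powr (2*\<sigma> - 2)) * c"
      using spectrum_sum_le[OF s1 m0] euler_factor_2(3)[OF s1 assms] by (simp add: c_def)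
    show ?thesis using sp lo up by simp
  qed
  have "((\<lambda>\<sigma>. spectrum m (complex_of_real \<sigma>)) \<longlongrightarrow> 0) (at_right 1)"
  proof (rule Lim_null_comparison)
    show "\<forall>\<^sub>F \<sigma> in at_right 1. norm (spectrum m (complex_of_real \<sigma>)) \<le> (1 - 1 / 2 powr (2*\<sigma> - 2)) * c"
      using ev by (rule eventually_mono) (rule bound)
    have "((\<lambda>\<sigma>::real. (1 - 1 / 2 powr (2*\<sigma> - 2)) * c) \<longlongrightarrow> (1 - 1 / 2 powr (2*1 - 2)) * c) (at_right 1)"
      by (intro tendsto_intros) auto
    then show "((\<lambda>\<sigma>::real. (1 - 1 / 2 powr (2*\<sigma> - 2)) * c) \<longlongrightarrow> 0) (at_right 1)" by simp
  qed
  then show ?thesis .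
qed

section \<open>Mean values and the orthogonality of Ramanujan sums\<close>

definition average :: "(nat \<Rightarrow> complex) \<Rightarrow> real \<Rightarrow> complex" where
  "average h x = (1 / of_real x) * (\<Sum>n\<in>{1..nat \<lfloor>x\<rfloor>}. h n)"

lemma average_sum: "average (\<lambda>n. \<Sum>k\<in>A. f k n) x = (\<Sum>k\<in>A. average (f k) x)"
  unfolding average_def by (subst sum.swap) (simp add: sum_distrib_left)

lemma average_cmult: "average (\<lambda>n. c * f n) x = c * average f x"
  unfolding average_def by (simp add: sum_distrib_left mult_ac)

lemma average_diff: "average (\<lambda>n. f n - g n) x = average f x - average g x"
  unfolding average_def by (simp add: sum_subtractf algebra_simps)

lemma norm_average_le:
  assumes "x > 0"
  shows "norm (average f x) \<le> (\<Sum>n\<in>{1..nat \<lfloor>x\<rfloor>}. norm (f n)) / x"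
proof -
  have "norm (average f x) = norm (\<Sum>n\<in>{1..nat \<lfloor>x\<rfloor>}. f n) / x"
    using assms by (simp add: average_def norm_mult norm_divide)
  also have "\<dots> \<le> (\<Sum>n\<in>{1..nat \<lfloor>x\<rfloor>}. norm (f n)) / x"
    using assms by (intro divide_right_mono norm_sum) simp
  finally show ?thesis .
qed

lemma tendsto_average_powers:
  fixes z :: complex
  assumes "norm z = 1"
  shows "(average (\<lambda>n. z ^ n) \<longlongrightarrow> (if z = 1 then 1 else 0)) at_top"
proof (cases "z = 1")
  case True
  then have "average (\<lambda>n. z ^ n) = (\<lambda>x. complex_of_real (real (nat \<lfloor>x\<rfloor>) / x))"
    by (simp add: average_def fun_eq_iff divide_inverse mult.commute)
  moreover have "((\<lambda>x. complex_of_real (real (nat \<lfloor>x\<rfloor>) / x)) \<longlongrightarrow> complex_of_real 1) at_top"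
    by (rule tendsto_of_real) real_asymp
  ultimately show ?thesis using True by simp
next
  case False
  define B where "B = 2 / norm (z - 1)"
  have bound: "norm (\<Sum>n\<in>{1..N}. z ^ n) \<le> B" for N
  proof -
    have "(\<Sum>n\<in>{1..N}. z ^ n) = z * (\<Sum>n<N. z ^ n)"
      using sum.atLeast1_atMost_eq[of "\<lambda>n. z ^ n" N] by (simp add: sum_distrib_left atLeastAtMost_def)
    also have "\<dots> = z * ((z ^ N - 1) / (z - 1))" using geometric_sum[OF False] by simp
    moreover have "norm (z ^ N - 1) \<le> 2"
      using norm_triangle_ineq4[of "z ^ N" 1] assms by (simp add: norm_power)
    ultimately show ?thesis unfolding B_def using assms False
      by (simp add: norm_mult norm_divide divide_right_mono)
  qed
  have "(average (\<lambda>n. z ^ n) \<longlongrightarrow> 0) at_top"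
  proof (rule Lim_null_comparison)
    show "\<forall>\<^sub>F x in at_top. norm (average (\<lambda>n. z ^ n) x) \<le> B / x"
    proof (rule eventually_mono[OF eventually_gt_at_top[of 0]])
      fix x :: real assume "x > 0"
      then show "norm (average (\<lambda>n. z ^ n) x) \<le> B / x"
        using bound by (simp add: average_def norm_mult norm_divide divide_right_mono)
    qed
    show "((\<lambda>x. B / x) \<longlongrightarrow> 0) at_top" by real_asymp
  qed
  then show ?thesis using False by simp
qed

lemma of_nat_divide_in_Ints_iff:
  assumes "d > 0"
  shows "real a / real d \<in> \<int> \<longleftrightarrow> d dvd (a::nat)"
proof
  assume "real a / real d \<in> \<int>"
  then obtain j where "real a / real d = of_int j" by (auto elim: Ints_cases)
  then have "real a = real d * of_int j" using assms by (simp add: field_simps)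
  then have "int a = int d * j" by (metis of_int_eq_iff of_int_mult of_int_of_nat_eq)
  then show "d dvd a" by (metis dvd_triv_left int_dvd_int_iff)
next
  assume "d dvd a"
  then show "real a / real d \<in> \<int>" using assms by auto
qed

definition neg_residue :: "nat \<Rightarrow> nat \<Rightarrow> nat" where
  "neg_residue q k = (q - k) mod q"

lemma neg_residue_reduced:
  assumes "k \<in> reduced_residues q"
  shows "neg_residue q k \<in> reduced_residues q"
proof -
  have "k < q" "coprime k q" using assms by (auto simp: reduced_residues_def)
  then have "coprime (q - k) q"
    by (smt (verit, best) coprime_imp_coprime dvd_diffD1 dvd_diff_nat less_imp_le)
  then show ?thesis using \<open>k < q\<close> by (simp add: neg_residue_def reduced_residues_def)
qed

lemma neg_residue_neg_residue:
  assumes "k < q"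
  shows "neg_residue q (neg_residue q k) = k"
  using assms by (cases "k = 0") (simp_all add: neg_residue_def)

lemma dvd_add_iff_eq_neg_residue:
  assumes "k < q" "l < q"
  shows "q dvd k + l \<longleftrightarrow> l = neg_residue q k"
proof (cases "k = 0")
  case True
  then show ?thesis using assms by (auto simp: neg_residue_def dest: dvd_imp_le)
next
  case False
  then have neg: "neg_residue q k = q - k" using assms by (simp add: neg_residue_def)
  show ?thesis
  proof
    assume "q dvd k + l"
    then obtain t where t: "k + l = q * t" by blast
    have "t > 0" using t False by (cases t) auto
    moreover have "t < 2" using t assms by (cases t; cases "t - 1") auto
    ultimately have "t = 1" by simp
    then show "l = neg_residue q k" using t neg by simp
  qed (use neg assms in simp)
qed

lemma e2pi_add_fractions_eq_1_iff:
  assumes "q > 0" "r > 0" "k \<in> reduced_residues q" "l \<in> reduced_residues r"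
  shows "e2pi (real k / real q + real l / real r) = 1 \<longleftrightarrow> (q = r \<and> q dvd k + l)"
proof -
  have ck: "coprime k q" and cl: "coprime l r" using assms by (auto simp: reduced_residues_def)
  have "real k / real q + real l / real r = real (k * r + l * q) / real (q * r)"
    using assms by (simp add: field_simps)
  then have "e2pi (real k / real q + real l / real r) = 1 \<longleftrightarrow> q * r dvd k * r + l * q"
    using of_nat_divide_in_Ints_iff[of "q * r" "k * r + l * q"] assms by (simp add: e2pi_eq_1_iff)
  also have "\<dots> \<longleftrightarrow> (q = r \<and> q dvd k + l)"
  proof
    assume h: "q * r dvd k * r + l * q"
    then have "q dvd k * r" by (metis dvd_add_left_iff dvd_mult_left dvd_triv_right)
    then have qr: "q dvd r" using ck by (simp add: coprime_dvd_mult_right_iff coprime_commute)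
    have "r dvd l * q" using h by (metis dvd_add_right_iff dvd_mult_right dvd_triv_right)
    then have "r dvd q" using cl by (simp add: coprime_dvd_mult_right_iff coprime_commute)
    with qr have "q = r" by (rule dvd_antisym)
    moreover have "q * q dvd q * (k + l)" using h \<open>q = r\<close> by (simp add: algebra_simps)
    then have "q dvd k + l" using assms by simp
    ultimately show "q = r \<and> q dvd k + l" by simp
  next
    assume h: "q = r \<and> q dvd k + l"
    then have "q * r dvd (k + l) * r" by (intro mult_dvd_mono) auto
    then show "q * r dvd k * r + l * q" using h by (simp add: add_mult_distrib)
  qed
  finally show ?thesis .
qed

lemma ramanujan_sum_product_expand:
  assumes "q > 0" "r > 0"
  shows "ramanujan_sum q n * ramanujan_sum r (n + m) =
    (\<Sum>k\<in>reduced_residues q. \<Sum>l\<in>reduced_residues r.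
       e2pi (real l * real m / real r) * e2pi (real k / real q + real l / real r) ^ n)"
proof -
  have "ramanujan_sum q n * ramanujan_sum r (n + m) =
     (\<Sum>k\<in>reduced_residues q. \<Sum>l\<in>reduced_residues r.
        e2pi (real k * real n / real q) * e2pi (real l * real (n + m) / real r))"
    using assms by (simp add: ramanujan_sum_reduced_residues sum_product)
  also have "\<dots> = (\<Sum>k\<in>reduced_residues q. \<Sum>l\<in>reduced_residues r.
      e2pi (real l * real m / real r) * e2pi (real k / real q + real l / real r) ^ n)"
  proof (intro sum.cong refl)
    fix k l
    have "real k * real n / real q + real l * real (n + m) / real r
        = real l * real m / real r + real n * (real k / real q + real l / real r)"
      using assms by (simp add: field_simps)
    then show "e2pi (real k * real n / real q) * e2pi (real l * real (n + m) / real r) =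
        e2pi (real l * real m / real r) * e2pi (real k / real q + real l / real r) ^ n"
      by (metis e2pi_add e2pi_of_nat_mult)
  qed
  finally show ?thesis .
qed

lemma sum_reduced_residues_resonant:
  assumes "q > 0" "r > 0"
  shows "(\<Sum>k\<in>reduced_residues q. \<Sum>l\<in>reduced_residues r. e2pi (real l * real m / real r) *
           (if e2pi (real k / real q + real l / real r) = 1 then 1 else 0))
       = (if q = r then ramanujan_sum q m else 0)"
proof (cases "q = r")
  case False
  then show ?thesis using e2pi_add_fractions_eq_1_iff[OF assms] by (simp add: sum.neutral)
next
  case True
  define E where "E l = e2pi (real l * real m / real q)" for l
  have "(\<Sum>k\<in>reduced_residues q. \<Sum>l\<in>reduced_residues q. e2pi (real l * real m / real q) *
           (if e2pi (real k / real q + real l / real q) = 1 then 1 else 0))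
      = (\<Sum>k\<in>reduced_residues q. \<Sum>l\<in>reduced_residues q. if l = neg_residue q k then E l else 0)"
  proof (intro sum.cong refl)
    fix k l assume "k \<in> reduced_residues q" "l \<in> reduced_residues q"
    then show "e2pi (real l * real m / real q) * (if e2pi (real k / real q + real l / real q) = 1 then 1 else 0)
        = (if l = neg_residue q k then E l else 0)"
      using e2pi_add_fractions_eq_1_iff[OF assms(1,1)] dvd_add_iff_eq_neg_residue[of k q l]
      by (simp add: E_def reduced_residues_def)
  qed
  also have "\<dots> = (\<Sum>k\<in>reduced_residues q. E (neg_residue q k))"
    using neg_residue_reduced by (simp add: sum.delta')
  also have "\<dots> = (\<Sum>l\<in>reduced_residues q. E l)"
  proof -
    have "neg_residue q (neg_residue q k) = k" if "k \<in> reduced_residues q" for k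
      using that by (simp add: neg_residue_neg_residue reduced_residues_def)
    then show ?thesis using neg_residue_reduced
      by (intro sum.reindex_bij_witness[where i="neg_residue q" and j="neg_residue q"]) auto
  qed
  also have "\<dots> = ramanujan_sum q m" using assms by (simp add: ramanujan_sum_reduced_residues E_def)
  finally show ?thesis using True by simp
qed

lemma tendsto_average_ramanujan_sum_product:
  assumes "q > 0" "r > 0"
  shows "(average (\<lambda>n. ramanujan_sum q n * ramanujan_sum r (n + m))
          \<longlongrightarrow> (if q = r then ramanujan_sum q m else 0)) at_top"
proof -
  define z where "z k l = e2pi (real k / real q + real l / real r)" for k l
  define E where "E l = e2pi (real l * real m / real r)" for l
  have "average (\<lambda>n. ramanujan_sum q n * ramanujan_sum r (n + m))
      = (\<lambda>x. \<Sum>k\<in>reduced_residues q. \<Sum>l\<in>reduced_residues r. E l * average (\<lambda>n. z k l ^ n) x)"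
    by (simp add: fun_eq_iff ramanujan_sum_product_expand[OF assms] average_sum average_cmult E_def z_def)
  moreover have "((\<lambda>x. \<Sum>k\<in>reduced_residues q. \<Sum>l\<in>reduced_residues r. E l * average (\<lambda>n. z k l ^ n) x)
      \<longlongrightarrow> (\<Sum>k\<in>reduced_residues q. \<Sum>l\<in>reduced_residues r. E l * (if z k l = 1 then 1 else 0))) at_top"
    by (intro tendsto_sum tendsto_mult tendsto_const tendsto_average_powers) (simp add: z_def)
  moreover have "(\<Sum>k\<in>reduced_residues q. \<Sum>l\<in>reduced_residues r. E l * (if z k l = 1 then 1 else 0))
      = (if q = r then ramanujan_sum q m else 0)"
    unfolding E_def z_def by (rule sum_reduced_residues_resonant[OF assms])
  ultimately show ?thesis by simp
qed

definition divisor_weight :: "real \<Rightarrow> nat \<Rightarrow> real" where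
  "divisor_weight \<tau> n = (\<Prod>p\<in>prime_factors n. 1 + real p * coef_abs \<tau> p)"

definition zeta_sum :: "real \<Rightarrow> real" where "zeta_sum \<tau> = (\<Sum>n. real n powr (-\<tau>))"

lemma sum_primes_powr_le_zeta_sum:
  assumes "\<tau> > 1"
  shows "(\<Sum>p\<in>primes_le N. real p powr (-\<tau>)) \<le> zeta_sum \<tau>"
  unfolding zeta_sum_def
proof (rule sum_le_suminf)
  show "summable (\<lambda>n. real n powr (-\<tau>))" using assms by (simp add: summable_real_powr_iff)
qed auto

lemma coef_abs_prime_le:
  assumes "\<tau> \<ge> 1" "prime p"
  shows "coef_abs \<tau> p \<le> 2 * real p powr (-\<tau>)" "real p * coef_abs \<tau> p \<le> 2"
proof -
  have p2: "real p \<ge> 2" using prime_ge_2_nat[OF assms(2)] by simp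
  define P where "P = real p powr (\<tau> - 1)"
  have P1: "P \<ge> 1" using p2 assms(1) by (simp add: P_def ge_one_powr_ge_zero)
  have a: "coef_abs \<tau> p = 1 / (P * (real p - 1))" using coef_abs_prime[OF assms(2)] by (simp add: P_def)
  have "real p powr (-\<tau>) = 1 / (P * real p)"
  proof -
    have "real p powr \<tau> = P * real p" unfolding P_def using p2 by (simp add: powr_diff)
    then show ?thesis by (simp add: powr_minus divide_inverse)
  qed
  then have b: "2 * real p powr (-\<tau>) = 2 / (P * real p)" by simp
  show "coef_abs \<tau> p \<le> 2 * real p powr (-\<tau>)"
    unfolding a b using P1 p2 by (simp add: divide_simps)
  show "real p * coef_abs \<tau> p \<le> 2"
  proof -
    have "P * (real p - 1) \<ge> real p - 1" using P1 p2 mult_right_mono[of 1 P "real p - 1"] by simp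
    then have "real p \<le> 2 * (P * (real p - 1))" using p2 by linarith
    then show ?thesis unfolding a using P1 p2 by (simp add: divide_simps)
  qed
qed

lemma sum_primes_coef_abs_le:
  assumes "\<tau> > 1"
  shows "(\<Sum>p\<in>primes_le N. coef_abs \<tau> p) \<le> 2 * zeta_sum \<tau>"
proof -
  have "(\<Sum>p\<in>primes_le N. coef_abs \<tau> p) \<le> (\<Sum>p\<in>primes_le N. 2 * real p powr (-\<tau>))"
    by (rule sum_mono) (use coef_abs_prime_le(1) assms in \<open>auto simp: primes_le_def\<close>)
  also have "\<dots> = 2 * (\<Sum>p\<in>primes_le N. real p powr (-\<tau>))" by (simp add: sum_distrib_left)
  also have "\<dots> \<le> 2 * zeta_sum \<tau>" using sum_primes_powr_le_zeta_sum[OF assms] by simp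
  finally show ?thesis .
qed

lemma coef_abs_rad_gcd_nonneg: "coef_abs \<sigma> q * rad_gcd n q \<ge> 0"
  using coef_abs_nonneg rad_gcd_ge_1 by (simp add: order_trans[OF zero_le_one])

lemma divisor_weight_ge_1: "divisor_weight \<tau> n \<ge> 1"
  unfolding divisor_weight_def by (rule prod_ge_1) (simp add: coef_abs_nonneg)

lemma prod_primes_one_plus_coef_abs_le:
  assumes "\<tau> > 1"
  shows "(\<Prod>p\<in>primes_le N. 1 + coef_abs \<tau> p) \<le> exp (2 * zeta_sum \<tau>)"
proof -
  have "(\<Prod>p\<in>primes_le N. 1 + coef_abs \<tau> p) \<le> exp (\<Sum>p\<in>primes_le N. coef_abs \<tau> p)"
    by (rule prod_le_exp_sum) (simp add: coef_abs_nonneg)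
  also have "\<dots> \<le> exp (2 * zeta_sum \<tau>)" using sum_primes_coef_abs_le[OF assms] by simp
  finally show ?thesis .
qed

lemma prod_primes_dvd_le_divisor_weight:
  assumes "n > 0"
  shows "(\<Prod>p\<in>primes_le N. if p dvd n then 1 + real p * coef_abs \<tau> p else 1) \<le> divisor_weight \<tau> n"
proof -
  have "(\<Prod>p\<in>primes_le N. if p dvd n then 1 + real p * coef_abs \<tau> p else 1)
      = (\<Prod>p\<in>{p\<in>primes_le N. p dvd n}. 1 + real p * coef_abs \<tau> p)"
    by (rule prod.inter_filter[symmetric]) simp
  also have "\<dots> \<le> divisor_weight \<tau> n" unfolding divisor_weight_def
  proof (rule prod_mono2)
    show "{p \<in> primes_le N. p dvd n} \<subseteq> prime_factors n"
      using assms by (auto simp: primes_le_def in_prime_factors_iff)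
  qed (auto simp: coef_abs_nonneg)
  finally show ?thesis .
qed

lemma sum_coef_abs_rad_gcd_le:
  assumes "\<tau> > 1" "n > 0"
  shows "(\<Sum>q\<in>{1..N}. coef_abs \<tau> q * rad_gcd n q) \<le> exp (2 * zeta_sum \<tau>) * divisor_weight \<tau> n"
proof -
  define x where "x p = coef_abs \<tau> p * (if p dvd n then real p else 1)" for p
  have "(\<Sum>q\<in>{1..N}. coef_abs \<tau> q * rad_gcd n q) = (\<Sum>q\<in>{1..N}. \<bar>coef_abs \<tau> q * rad_gcd n q\<bar>)"
    using coef_abs_rad_gcd_nonneg by simp
  also have "\<dots> \<le> (\<Prod>p\<in>primes_le N. 1 + x p)"
  proof (rule sum_abs_le_euler_product)
    fix B :: "nat set" assume B: "finite B" "\<forall>p\<in>B. prime p"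
    have "coef_abs \<tau> (\<Prod>B) * rad_gcd n (\<Prod>B) = (\<Prod>p\<in>B. x p)"
      using coef_abs_prod_primes[OF B] rad_gcd_prod_primes[OF B] by (simp add: x_def prod.distrib)
    then show "\<bar>coef_abs \<tau> (\<Prod>B) * rad_gcd n (\<Prod>B)\<bar> \<le> (\<Prod>p\<in>B. x p)"
      using coef_abs_rad_gcd_nonneg[of \<tau> "\<Prod>B" n] by simp
  qed (simp_all add: x_def coef_abs_nonneg coef_abs_nonsquarefree)
  also have "\<dots> \<le> (\<Prod>p\<in>primes_le N. (1 + coef_abs \<tau> p) * (if p dvd n then 1 + real p * coef_abs \<tau> p else 1))"
    by (rule prod_mono) (use coef_abs_nonneg[of \<tau>] in \<open>auto simp: x_def algebra_simps\<close>)
  also have "\<dots> = (\<Prod>p\<in>primes_le N. 1 + coef_abs \<tau> p)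
      * (\<Prod>p\<in>primes_le N. if p dvd n then 1 + real p * coef_abs \<tau> p else 1)"
    by (rule prod.distrib)
  also have "\<dots> \<le> exp (2 * zeta_sum \<tau>) * divisor_weight \<tau> n"
    using prod_primes_one_plus_coef_abs_le[OF assms(1)] prod_primes_dvd_le_divisor_weight[OF assms(2)]
    by (intro mult_mono prod_nonneg) (auto simp: coef_abs_nonneg)
  finally show ?thesis .
qed

lemma card_multiples_le:
  assumes "d > 0"
  shows "real (card {n\<in>{1..N}. d dvd n}) \<le> real N / real d"
proof -
  have sub: "{n\<in>{1..N}. d dvd n} \<subseteq> (\<lambda>k. d*k) ` {1..N div d}"
  proof
    fix n assume "n \<in> {n\<in>{1..N}. d dvd n}"
    then obtain k where k: "n = d*k" "1 \<le> n" "n \<le> N" by auto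
    then have "k \<ge> 1" by (cases k) auto
    moreover have "k \<le> N div d" using k assms by (simp add: less_eq_div_iff_mult_less_eq mult.commute)
    ultimately show "n \<in> (\<lambda>k. d*k) ` {1..N div d}" using k by auto
  qed
  have "card {n\<in>{1..N}. d dvd n} \<le> card ((\<lambda>k. d*k) ` {1..N div d})" by (rule card_mono[OF _ sub]) simp
  also have "\<dots> \<le> card {1..N div d}" by (rule card_image_le) simp
  finally have c: "card {n\<in>{1..N}. d dvd n} \<le> N div d" by simp
  have "d * (N div d) \<le> N" by (rule times_div_less_eq_dividend)
  then have "real d * real (N div d) \<le> real N" by (metis of_nat_le_iff of_nat_mult)
  then have "real (N div d) \<le> real N / real d" using assms by (simp add: field_simps)
  then show ?thesis using c by (meson of_nat_le_iff order_trans)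
qed

lemma one_plus_sq_le: "0 \<le> t \<Longrightarrow> t \<le> 2 \<Longrightarrow> (1 + t)^2 \<le> 1 + 4 * (t::real)"
proof -
  assume t: "0 \<le> t" "t \<le> 2"
  have "t * t \<le> 2 * t" using t by (intro mult_right_mono) auto
  then show ?thesis by (simp add: power2_eq_square algebra_simps)
qed

lemma card_subset_prime_factors_le:
  assumes "B \<subseteq> primes_le N"
  shows "real (card {n\<in>{1..N}. B \<subseteq> prime_factors n}) \<le> real N / real (\<Prod>B)"
proof -
  have "{n\<in>{1..N}. B \<subseteq> prime_factors n} \<subseteq> {n\<in>{1..N}. \<Prod>B dvd n}"
    using prod_dvd_of_subset_prime_factors[OF subset_primes_le[OF assms]] by blast
  then have "card {n\<in>{1..N}. B \<subseteq> prime_factors n} \<le> card {n\<in>{1..N}. \<Prod>B dvd n}"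
    by (rule card_mono[rotated]) simp
  also have "real (card {n\<in>{1..N}. \<Prod>B dvd n}) \<le> real N / real (\<Prod>B)"
    by (rule card_multiples_le[OF prod_primes_pos[OF subset_primes_le(2)[OF assms]]])
  finally show ?thesis by simp
qed

lemma divisor_weight_sq_le_sum_subsets:
  assumes "\<tau> \<ge> 1" "n \<in> {1..N}"
  shows "(divisor_weight \<tau> n)^2
      \<le> (\<Sum>B\<in>Pow (primes_le N). if B \<subseteq> prime_factors n then \<Prod>p\<in>B. 4 * real p * coef_abs \<tau> p else 0)"
proof -
  have "(divisor_weight \<tau> n)^2 = (\<Prod>p\<in>prime_factors n. (1 + real p * coef_abs \<tau> p)^2)"
    unfolding divisor_weight_def by (simp add: prod_power_distrib)
  also have "\<dots> \<le> (\<Prod>p\<in>prime_factors n. 1 + 4 * real p * coef_abs \<tau> p)"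
  proof (rule prod_mono)
    fix p assume "p \<in> prime_factors n"
    then have "real p * coef_abs \<tau> p \<le> 2" "real p * coef_abs \<tau> p \<ge> 0"
      using coef_abs_prime_le[of \<tau> p] coef_abs_nonneg[of \<tau> p] assms(1) by auto
    then show "0 \<le> (1 + real p * coef_abs \<tau> p)^2 \<and> (1 + real p * coef_abs \<tau> p)^2 \<le> 1 + 4 * real p * coef_abs \<tau> p"
      using one_plus_sq_le by (auto simp: mult.assoc)
  qed
  also have "\<dots> = (\<Sum>B\<in>Pow (prime_factors n). \<Prod>p\<in>B. 4 * real p * coef_abs \<tau> p)"
    using prod_add[of "prime_factors n" "\<lambda>p. 4 * real p * coef_abs \<tau> p" "\<lambda>_. 1"] by (simp add: add.commute)
  also have "Pow (prime_factors n) = {B\<in>Pow (primes_le N). B \<subseteq> prime_factors n}"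
    using prime_factors_subset_primes_le[of n N] assms(2) by auto
  also have "(\<Sum>B\<in>{B\<in>Pow (primes_le N). B \<subseteq> prime_factors n}. \<Prod>p\<in>B. 4 * real p * coef_abs \<tau> p)
      = (\<Sum>B\<in>Pow (primes_le N). if B \<subseteq> prime_factors n then \<Prod>p\<in>B. 4 * real p * coef_abs \<tau> p else 0)"
    by (rule sum.inter_filter) simp
  finally show ?thesis .
qed

lemma sum_divisor_weight_sq_le:
  assumes "\<tau> > 1"
  shows "(\<Sum>n\<in>{1..N}. (divisor_weight \<tau> n)^2) \<le> exp (8 * zeta_sum \<tau>) * real N"
proof -
  define R where "R B = (\<Prod>p\<in>B. 4 * real p * coef_abs \<tau> p)" for B
  have R0: "R B \<ge> 0" for B unfolding R_def by (intro prod_nonneg) (simp add: coef_abs_nonneg)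
  have "(\<Sum>n\<in>{1..N}. (divisor_weight \<tau> n)^2)
      \<le> (\<Sum>n\<in>{1..N}. \<Sum>B\<in>Pow (primes_le N). if B \<subseteq> prime_factors n then R B else 0)"
    unfolding R_def using assms by (intro sum_mono divisor_weight_sq_le_sum_subsets) auto
  also have "\<dots> = (\<Sum>B\<in>Pow (primes_le N). \<Sum>n\<in>{1..N}. if B \<subseteq> prime_factors n then R B else 0)"
    by (rule sum.swap)
  also have "\<dots> = (\<Sum>B\<in>Pow (primes_le N). R B * real (card {n\<in>{1..N}. B \<subseteq> prime_factors n}))"
    by (simp only: sum.inter_filter[symmetric] finite_atLeastAtMost sum_constant mult.commute)
  also have "\<dots> \<le> (\<Sum>B\<in>Pow (primes_le N). R B * (real N / real (\<Prod>B)))"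
    using R0 card_subset_prime_factors_le by (intro sum_mono mult_left_mono) auto
  also have "\<dots> = real N * (\<Sum>B\<in>Pow (primes_le N). \<Prod>p\<in>B. 4 * coef_abs \<tau> p)"
    unfolding sum_distrib_left
  proof (rule sum.cong[OF refl])
    fix B assume "B \<in> Pow (primes_le N)"
    then have "\<Prod>B > 0" using prod_primes_pos[OF subset_primes_le(2)] by simp
    then have "real (\<Prod>B) > 0" by (simp only: of_nat_0_less_iff)
    moreover have "R B = (\<Prod>p\<in>B. 4 * coef_abs \<tau> p) * real (\<Prod>B)"
      by (simp add: R_def prod.distrib of_nat_prod mult_ac)
    ultimately show "R B * (real N / real (\<Prod>B)) = real N * (\<Prod>p\<in>B. 4 * coef_abs \<tau> p)"
      by simp
  qed
  also have "\<dots> = real N * (\<Prod>p\<in>primes_le N. 1 + 4 * coef_abs \<tau> p)"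
    using prod_add[of "primes_le N" "\<lambda>p. 4 * coef_abs \<tau> p" "\<lambda>_. 1"] by (simp add: add.commute)
  also have "\<dots> \<le> real N * exp (8 * zeta_sum \<tau>)"
  proof (rule mult_left_mono)
    have "(\<Prod>p\<in>primes_le N. 1 + 4 * coef_abs \<tau> p) \<le> exp (\<Sum>p\<in>primes_le N. 4 * coef_abs \<tau> p)"
      by (rule prod_le_exp_sum) (simp add: coef_abs_nonneg)
    also have "\<dots> \<le> exp (8 * zeta_sum \<tau>)"
      using sum_primes_coef_abs_le[OF assms, of N] by (simp add: sum_distrib_left[symmetric])
    finally show "(\<Prod>p\<in>primes_le N. 1 + 4 * coef_abs \<tau> p) \<le> exp (8 * zeta_sum \<tau>)" .
  qed simp
  finally show ?thesis by (simp add: mult.commute)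
qed

lemma norm_coef_ramanujan_sum_le:
  assumes "q > 0"
  shows "norm (coef s q * ramanujan_sum q n) \<le> coef_abs (Re s) q * rad_gcd n q"
proof (cases "squarefree q")
  case True
  have "norm (coef s q * ramanujan_sum q n) = coef_abs (Re s) q * norm (ramanujan_sum q n)"
    by (simp add: norm_mult norm_coef)
  also have "\<dots> \<le> coef_abs (Re s) q * rad_gcd n q"
    by (rule mult_left_mono[OF norm_ramanujan_sum_le[OF assms True] coef_abs_nonneg])
  finally show ?thesis .
next
  case False
  then have "coef_abs (Re s) q = 0" by (rule coef_abs_nonsquarefree)
  then have "coef s q = 0" using norm_coef[of s q] by simp
  then show ?thesis using False by (simp add: coef_abs_nonsquarefree)
qed

lemma coef_abs_shift:
  assumes "q > 0"
  shows "coef_abs \<sigma> q = coef_abs \<tau> q * real q powr (\<tau> - \<sigma>)"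
proof -
  have "real q powr (\<sigma> - 1) = real q powr (\<tau> - 1) * real q powr (\<sigma> - \<tau>)"
    using assms by (simp add: powr_add[symmetric])
  moreover have "real q powr (\<tau> - \<sigma>) = 1 / real q powr (\<sigma> - \<tau>)"
    using assms by (simp add: powr_minus_divide[symmetric])
  ultimately show ?thesis unfolding coef_abs_def by simp
qed

lemma coef_abs_le_powr:
  assumes "\<tau> \<le> \<sigma>" "1 \<le> Q" "Q \<le> q"
  shows "coef_abs \<sigma> q \<le> coef_abs \<tau> q * real Q powr (\<tau> - \<sigma>)"
proof -
  have q: "q > 0" using assms by simp
  have "real q powr (\<tau> - \<sigma>) \<le> real Q powr (\<tau> - \<sigma>)"
    using assms by (intro powr_mono2') auto
  then show ?thesis using coef_abs_shift[OF q, of \<sigma> \<tau>] coef_abs_nonneg[of \<tau> q] by (simp add: mult_left_mono)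
qed

lemma coef_abs_antimono:
  assumes "\<tau> \<le> \<sigma>" "q > 0"
  shows "coef_abs \<sigma> q \<le> coef_abs \<tau> q"
  using coef_abs_le_powr[OF assms(1), of 1 q] assms by simp

lemma sum_coef_abs_rad_gcd_shift_le:
  assumes "\<tau> > 1" "n > 0"
  shows "(\<Sum>k<M. coef_abs \<tau> (Suc (k + Q)) * rad_gcd n (Suc (k + Q))) \<le> exp (2 * zeta_sum \<tau>) * divisor_weight \<tau> n"
proof -
  let ?h = "\<lambda>k. Suc (k + Q)"
  let ?G = "\<lambda>q. coef_abs \<tau> q * rad_gcd n q"
  have nn: "?G q \<ge> 0" for q by (rule coef_abs_rad_gcd_nonneg)
  have inj: "inj_on ?h {..<M}" by (rule inj_onI) simp
  have "(\<Sum>k<M. ?G (?h k)) = (\<Sum>q\<in>?h ` {..<M}. ?G q)" by (simp add: sum.reindex[OF inj])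
  also have "\<dots> \<le> (\<Sum>q\<in>{1..Q+M}. ?G q)"
    by (rule sum_mono2) (auto simp: nn)
  also have "\<dots> \<le> exp (2 * zeta_sum \<tau>) * divisor_weight \<tau> n" by (rule sum_coef_abs_rad_gcd_le[OF assms])
  finally show ?thesis .
qed

section \<open>The mean value of f(n, s) f(n + m, conj s)\<close>

definition fns_partial :: "nat \<Rightarrow> nat \<Rightarrow> complex \<Rightarrow> complex" where
  "fns_partial Q n s = (\<Sum>k<Q. coef s (Suc k) * ramanujan_sum (Suc k) n)"

lemma summable_norm_fns_terms:
  assumes "Re s > 1" "n > 0"
  shows "summable (\<lambda>k. norm (coef s (Suc k) * ramanujan_sum (Suc k) n))"
proof (rule summable_comparison_test')
  show "summable (\<lambda>k. coef_abs (Re s) (Suc (k + 0)) * rad_gcd n (Suc (k + 0)))"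
  proof (rule summableI_nonneg_bounded)
    fix M
    show "(\<Sum>k<M. coef_abs (Re s) (Suc (k + 0)) * rad_gcd n (Suc (k + 0)))
        \<le> exp (2 * zeta_sum (Re s)) * divisor_weight (Re s) n"
      by (rule sum_coef_abs_rad_gcd_shift_le[OF assms])
  qed (simp add: coef_abs_rad_gcd_nonneg)
  show "norm (norm (coef s (Suc k) * ramanujan_sum (Suc k) n))
      \<le> coef_abs (Re s) (Suc (k + 0)) * rad_gcd n (Suc (k + 0))" for k
    using norm_coef_ramanujan_sum_le[of "Suc k" s n] by simp
qed

lemma norm_fns_minus_partial_le:
  assumes "Re s > 1" "n > 0" "1 < \<tau>" "\<tau> \<le> Re s" "Q \<ge> 1"
  shows "norm (fns n s - fns_partial Q n s)
          \<le> real Q powr (\<tau> - Re s) * (exp (2 * zeta_sum \<tau>) * divisor_weight \<tau> n)"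
proof -
  define t where "t k = coef s (Suc k) * ramanujan_sum (Suc k) n" for k
  have sn: "summable (\<lambda>k. norm (t k))" unfolding t_def by (rule summable_norm_fns_terms[OF assms(1,2)])
  have sn': "summable (\<lambda>k. norm (t (k + Q)))"
    using sn summable_iff_shift[of "\<lambda>k. norm (t k)" Q] by simp
  have bound: "(\<Sum>k<M. norm (t (k + Q)))
      \<le> real Q powr (\<tau> - Re s) * (exp (2 * zeta_sum \<tau>) * divisor_weight \<tau> n)" for M
  proof -
    have "norm (t (k + Q)) \<le> real Q powr (\<tau> - Re s) * (coef_abs \<tau> (Suc (k + Q)) * rad_gcd n (Suc (k + Q)))"
      for k
    proof -
      have "norm (t (k + Q)) \<le> coef_abs (Re s) (Suc (k + Q)) * rad_gcd n (Suc (k + Q))"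
        unfolding t_def by (rule norm_coef_ramanujan_sum_le) simp
      also have "\<dots> \<le> coef_abs \<tau> (Suc (k + Q)) * real Q powr (\<tau> - Re s) * rad_gcd n (Suc (k + Q))"
        using coef_abs_le_powr[OF assms(4,5), of "Suc (k + Q)"] rad_gcd_ge_1[of n "Suc (k + Q)"]
        by (intro mult_right_mono) auto
      finally show ?thesis by (simp add: algebra_simps)
    qed
    then have "(\<Sum>k<M. norm (t (k + Q)))
        \<le> real Q powr (\<tau> - Re s) * (\<Sum>k<M. coef_abs \<tau> (Suc (k + Q)) * rad_gcd n (Suc (k + Q)))"
      by (simp add: sum_distrib_left sum_mono)
    also have "\<dots> \<le> real Q powr (\<tau> - Re s) * (exp (2 * zeta_sum \<tau>) * divisor_weight \<tau> n)"
      by (rule mult_left_mono[OF sum_coef_abs_rad_gcd_shift_le[OF assms(3,2)]]) simp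
    finally show ?thesis .
  qed
  have "fns n s = (\<Sum>k. t (k + Q)) + fns_partial Q n s"
    unfolding fns_def fns_partial_def t_def[symmetric]
    by (rule suminf_split_initial_segment[OF summable_norm_cancel[OF sn]])
  then have "norm (fns n s - fns_partial Q n s) = norm (\<Sum>k. t (k + Q))" by simp
  also have "\<dots> \<le> (\<Sum>k. norm (t (k + Q)))" by (rule summable_norm[OF sn'])
  also have "\<dots> \<le> real Q powr (\<tau> - Re s) * (exp (2 * zeta_sum \<tau>) * divisor_weight \<tau> n)"
    by (rule suminf_le_const[OF sn' bound])
  finally show ?thesis .
qed

lemma norm_fns_partial_le:
  assumes "n > 0" "1 < \<tau>" "\<tau> \<le> Re s"
  shows "norm (fns_partial Q n s) \<le> exp (2 * zeta_sum \<tau>) * divisor_weight \<tau> n"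
proof -
  have "norm (fns_partial Q n s) \<le> (\<Sum>k<Q. norm (coef s (Suc k) * ramanujan_sum (Suc k) n))"
    unfolding fns_partial_def by (rule norm_sum)
  also have "\<dots> \<le> (\<Sum>k<Q. coef_abs \<tau> (Suc (k + 0)) * rad_gcd n (Suc (k + 0)))"
  proof (rule sum_mono)
    fix k
    have "norm (coef s (Suc k) * ramanujan_sum (Suc k) n) \<le> coef_abs (Re s) (Suc k) * rad_gcd n (Suc k)"
      by (rule norm_coef_ramanujan_sum_le) simp
    also have "\<dots> \<le> coef_abs \<tau> (Suc k) * rad_gcd n (Suc k)"
      using coef_abs_antimono[OF assms(3), of "Suc k"] rad_gcd_ge_1[of n "Suc k"]
      by (intro mult_right_mono) auto
    finally show "norm (coef s (Suc k) * ramanujan_sum (Suc k) n)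
        \<le> coef_abs \<tau> (Suc (k + 0)) * rad_gcd n (Suc (k + 0))" by simp
  qed
  also have "\<dots> \<le> exp (2 * zeta_sum \<tau>) * divisor_weight \<tau> n"
    by (rule sum_coef_abs_rad_gcd_shift_le[OF assms(2,1)])
  finally show ?thesis .
qed

lemma norm_fns_le:
  assumes "Re s > 1" "n > 0" "1 < \<tau>" "\<tau> \<le> Re s"
  shows "norm (fns n s) \<le> exp (2 * zeta_sum \<tau>) * divisor_weight \<tau> n"
proof -
  have "(\<lambda>Q. fns_partial Q n s) \<longlonglongrightarrow> fns n s"
    unfolding fns_def fns_partial_def
    by (rule summable_LIMSEQ[OF summable_norm_cancel[OF summable_norm_fns_terms[OF assms(1,2)]]])
  then show ?thesis
    by (rule LIMSEQ_le_const2[OF tendsto_norm]) (use norm_fns_partial_le[OF assms(2-4)] in auto)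
qed

lemma tendsto_spectrum_partial:
  assumes "Re s > 1" "m > 0"
  shows "(\<lambda>Q. \<Sum>k<Q. complex_of_real ((cmod (coef s (Suc k)))\<^sup>2) * ramanujan_sum (Suc k) m)
           \<longlonglongrightarrow> spectrum m s"
proof -
  have "summable (\<lambda>k. spectrum_term m (Re s) (Suc k))"
    using summable_rabs_cancel[OF summable_spectrum_term[of "Re s" m]] assms by simp
  then have "summable (\<lambda>k. complex_of_real (spectrum_term m (Re s) (Suc k)))"
    by (rule summable_of_real)
  then show ?thesis
    unfolding spectrum_def spectrum_series_term[OF zero_less_Suc] by (rule summable_LIMSEQ)
qed

lemma tendsto_average_fns_partial_product:
  shows "(average (\<lambda>n. fns_partial Q n s * fns_partial Q (n + m) (cnj s))
           \<longlongrightarrow> (\<Sum>k<Q. complex_of_real ((cmod (coef s (Suc k)))\<^sup>2) * ramanujan_sum (Suc k) m)) at_top"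
proof -
  define a where "a k = coef s (Suc k)" for k
  define b where "b l = coef (cnj s) (Suc l)" for l
  have expand: "fns_partial Q n s * fns_partial Q (n + m) (cnj s)
      = (\<Sum>k<Q. \<Sum>l<Q. a k * b l * (ramanujan_sum (Suc k) n * ramanujan_sum (Suc l) (n + m)))" for n
    by (simp add: fns_partial_def sum_product a_def b_def mult_ac)
  have "average (\<lambda>n. fns_partial Q n s * fns_partial Q (n + m) (cnj s))
      = (\<lambda>x. \<Sum>k<Q. \<Sum>l<Q. a k * b l *
           average (\<lambda>n. ramanujan_sum (Suc k) n * ramanujan_sum (Suc l) (n + m)) x)"
    by (rule ext) (simp only: expand average_sum average_cmult)
  moreover have "((\<lambda>x. \<Sum>k<Q. \<Sum>l<Q. a k * b l *
           average (\<lambda>n. ramanujan_sum (Suc k) n * ramanujan_sum (Suc l) (n + m)) x) \<longlongrightarrow>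
      (\<Sum>k<Q. \<Sum>l<Q. a k * b l * (if Suc k = Suc l then ramanujan_sum (Suc k) m else 0))) at_top"
    by (intro tendsto_sum tendsto_mult tendsto_const tendsto_average_ramanujan_sum_product) auto
  moreover have "(\<Sum>k<Q. \<Sum>l<Q. a k * b l * (if Suc k = Suc l then ramanujan_sum (Suc k) m else 0))
      = (\<Sum>k<Q. a k * b k * ramanujan_sum (Suc k) m)"
    by (simp add: if_distrib sum.delta cong: if_cong)
  moreover have "a k * b k = complex_of_real ((cmod (coef s (Suc k)))\<^sup>2)" for k
    unfolding a_def b_def coef_cnj complex_norm_square by (rule refl)
  ultimately show ?thesis by simp
qed

lemma sum_sq_shift_le:
  fixes w :: "nat \<Rightarrow> real"
  shows "(\<Sum>n\<in>{1..N}. (w (n + m))^2) \<le> (\<Sum>n\<in>{1..N + m}. (w n)^2)"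
proof -
  have "(\<Sum>n\<in>{1..N}. (w (n + m))^2) = (\<Sum>n\<in>(\<lambda>n. n + m) ` {1..N}. (w n)^2)"
    by (subst sum.reindex) (auto simp: inj_on_def)
  also have "\<dots> \<le> (\<Sum>n\<in>{1..N + m}. (w n)^2)"
    by (rule sum_mono2) auto
  finally show ?thesis .
qed

lemma norm_mult_diff_le:
  fixes f g F G :: "'a::real_normed_field" and \<eta> K w1 w2 :: real
  assumes "norm (f - F) \<le> \<eta> * (K * w1)" "norm g \<le> K * w2" "norm F \<le> K * w1"
    "norm (g - G) \<le> \<eta> * (K * w2)" "\<eta> \<ge> 0" "K \<ge> 0" "w1 \<ge> 0" "w2 \<ge> 0"
  shows "norm (f * g - F * G) \<le> \<eta> * K * K * (w1^2 + w2^2)"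
proof -
  have "f * g - F * G = (f - F) * g + F * (g - G)" by (simp add: algebra_simps)
  then have "norm (f * g - F * G) \<le> norm (f - F) * norm g + norm F * norm (g - G)"
    by (metis norm_mult norm_triangle_ineq)
  also have "\<dots> \<le> \<eta> * (K * w1) * (K * w2) + K * w1 * (\<eta> * (K * w2))"
    using assms by (intro add_mono mult_mono) auto
  also have "\<dots> = \<eta> * K * K * (2 * w1 * w2)" by (simp add: algebra_simps)
  also have "\<dots> \<le> \<eta> * K * K * (w1^2 + w2^2)"
    using assms(5,6) sum_squares_bound[of w1 w2] by (intro mult_left_mono) auto
  finally show ?thesis .
qed

text \<open>The truncation error is uniform in \<open>x\<close> because the pointwise error is controlled by
  \<open>divisor_weight\<close>, whose mean square is bounded.\<close>

lemma average_truncation_error_le: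
  assumes "Re s > 1" "1 < \<tau>" "\<tau> \<le> Re s" "x \<ge> 1" "Q \<ge> 1"
  defines "K \<equiv> exp (2 * zeta_sum \<tau>)" and "C \<equiv> exp (8 * zeta_sum \<tau>)"
  shows "norm (average (\<lambda>n. fns n s * fns (n + m) (cnj s)) x
             - average (\<lambda>n. fns_partial Q n s * fns_partial Q (n + m) (cnj s)) x)
         \<le> K * K * C * (2 + real m) * real Q powr (\<tau> - Re s)"
proof -
  define N where "N = nat \<lfloor>x\<rfloor>"
  define \<eta> where "\<eta> = real Q powr (\<tau> - Re s)"
  define w where "w = divisor_weight \<tau>"
  have \<eta>0: "\<eta> \<ge> 0" and K0: "K \<ge> 0" and w0: "w n \<ge> 0" for n
    using divisor_weight_ge_1[of \<tau> n] by (simp_all add: \<eta>_def K_def w_def)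
  have pointwise: "norm (fns n s * fns (n + m) (cnj s) - fns_partial Q n s * fns_partial Q (n + m) (cnj s))
      \<le> \<eta> * K * K * ((w n)^2 + (w (n + m))^2)" if "n \<in> {1..N}" for n
  proof (rule norm_mult_diff_le)
    have n: "n > 0" "n + m > 0" "Re (cnj s) = Re s" using that by auto
    show "norm (fns n s - fns_partial Q n s) \<le> \<eta> * (K * w n)"
      unfolding \<eta>_def K_def w_def using norm_fns_minus_partial_le[OF assms(1) n(1) assms(2,3,5)] .
    show "norm (fns (n + m) (cnj s)) \<le> K * w (n + m)"
      unfolding K_def w_def using norm_fns_le[of "cnj s" "n + m" \<tau>] assms n by simp
    show "norm (fns_partial Q n s) \<le> K * w n"
      unfolding K_def w_def using norm_fns_partial_le[OF n(1) assms(2,3)] .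
    show "norm (fns (n + m) (cnj s) - fns_partial Q (n + m) (cnj s)) \<le> \<eta> * (K * w (n + m))"
      unfolding \<eta>_def K_def w_def using norm_fns_minus_partial_le[of "cnj s" "n + m" \<tau> Q] assms n by simp
  qed (use \<eta>0 K0 w0 in auto)
  have "norm (average (\<lambda>n. fns n s * fns (n + m) (cnj s)) x
             - average (\<lambda>n. fns_partial Q n s * fns_partial Q (n + m) (cnj s)) x)
      \<le> (\<Sum>n\<in>{1..N}. norm (fns n s * fns (n + m) (cnj s)
                        - fns_partial Q n s * fns_partial Q (n + m) (cnj s))) / x"
    unfolding average_diff[symmetric] N_def using assms(4) by (intro norm_average_le) simp
  also have "\<dots> \<le> (\<Sum>n\<in>{1..N}. \<eta> * K * K * ((w n)^2 + (w (n + m))^2)) / x"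
    using assms(4) pointwise by (intro divide_right_mono sum_mono) auto
  also have "\<dots> = \<eta> * K * K * ((\<Sum>n\<in>{1..N}. (w n)^2) + (\<Sum>n\<in>{1..N}. (w (n + m))^2)) / x"
    by (simp add: sum_distrib_left sum.distrib distrib_left)
  also have "\<dots> \<le> \<eta> * K * K * (C * real N + C * real (N + m)) / x"
  proof -
    have "(\<Sum>n\<in>{1..N}. (w (n + m))^2) \<le> (\<Sum>n\<in>{1..N + m}. (w n)^2)"
      by (rule sum_sq_shift_le)
    also have "\<dots> \<le> C * real (N + m)"
      using sum_divisor_weight_sq_le[OF assms(2), of "N + m"] by (simp add: C_def w_def)
    finally have "(\<Sum>n\<in>{1..N}. (w (n + m))^2) \<le> C * real (N + m)" .
    moreover have "(\<Sum>n\<in>{1..N}. (w n)^2) \<le> C * real N"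
      using sum_divisor_weight_sq_le[OF assms(2), of N] by (simp add: C_def w_def)
    ultimately show ?thesis using assms(4) \<eta>0 K0
      by (intro divide_right_mono mult_left_mono add_mono) auto
  qed
  also have "\<dots> \<le> \<eta> * K * K * C * (2 + real m)"
  proof -
    have "real N \<le> x" using assms(4) unfolding N_def by linarith
    then have "2 * real N + real m \<le> (2 + real m) * x"
      using assms(4) mult_left_mono[of 1 x "real m"] by (simp add: algebra_simps)
    then have "C * (2 * real N + real m) \<le> C * ((2 + real m) * x)"
      by (rule mult_left_mono) (simp add: C_def)
    then have "(C * real N + C * real (N + m)) / x \<le> C * (2 + real m)"
      using assms(4) by (simp add: divide_le_eq algebra_simps)
    then have "\<eta> * K * K * ((C * real N + C * real (N + m)) / x) \<le> \<eta> * K * K * (C * (2 + real m))"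
      using \<eta>0 K0 by (intro mult_left_mono) auto
    then show ?thesis by (simp add: mult.assoc)
  qed
  finally show ?thesis by (simp add: \<eta>_def mult_ac)
qed

lemma tendsto_of_approximations:
  fixes M :: "'a \<Rightarrow> 'b::metric_space"
  assumes "\<And>Q. (A Q \<longlongrightarrow> P Q) F" "P \<longlonglongrightarrow> L" "\<eta> \<longlonglongrightarrow> 0"
    and "\<forall>\<^sub>F Q in sequentially. \<forall>\<^sub>F x in F. dist (M x) (A Q x) \<le> \<eta> Q"
  shows "(M \<longlongrightarrow> L) F"
proof (rule tendstoI)
  fix \<epsilon> :: real assume "\<epsilon> > 0"
  then have e3: "\<epsilon> / 3 > 0" by simp
  have "\<forall>\<^sub>F Q in sequentially.
      dist (P Q) L < \<epsilon> / 3 \<and> \<eta> Q < \<epsilon> / 3 \<and> (\<forall>\<^sub>F x in F. dist (M x) (A Q x) \<le> \<eta> Q)"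
    using tendstoD[OF assms(2) e3] tendstoD[OF assms(3) e3] assms(4)
    by eventually_elim (auto simp: dist_real_def)
  then obtain Q where Q: "dist (P Q) L < \<epsilon> / 3" "\<eta> Q < \<epsilon> / 3"
      "\<forall>\<^sub>F x in F. dist (M x) (A Q x) \<le> \<eta> Q"
    by (auto simp: eventually_sequentially)
  from Q(3) tendstoD[OF assms(1)[of Q] e3]
  show "\<forall>\<^sub>F x in F. dist (M x) L < \<epsilon>"
  proof eventually_elim
    case (elim x)
    then show ?case using Q(1,2) by (intro dist_triangle_third[of "M x" "A Q x" \<epsilon> "P Q" L]) auto
  qed
qed

lemma tendsto_average_fns_product:
  assumes "Re s > 1" "m > 0"
  shows "(average (\<lambda>n. fns n s * fns (n + m) (cnj s)) \<longlongrightarrow> spectrum m s) at_top"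
proof -
  define \<tau> where "\<tau> = (Re s + 1) / 2"
  have \<tau>: "1 < \<tau>" "\<tau> \<le> Re s" "\<tau> - Re s < 0" using assms by (auto simp: \<tau>_def)
  define D where "D = exp (2 * zeta_sum \<tau>) * exp (2 * zeta_sum \<tau>) * exp (8 * zeta_sum \<tau>) * (2 + real m)"
  have "(\<lambda>Q. D * real Q powr (\<tau> - Re s)) \<longlonglongrightarrow> 0"
    using tendsto_mult_right_zero[OF tendsto_neg_powr[OF \<tau>(3) filterlim_real_sequentially]] by simp
  moreover have "\<forall>\<^sub>F Q in sequentially. \<forall>\<^sub>F x in at_top.
      dist (average (\<lambda>n. fns n s * fns (n + m) (cnj s)) x)
        (average (\<lambda>n. fns_partial Q n s * fns_partial Q (n + m) (cnj s)) x) \<le> D * real Q powr (\<tau> - Re s)"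
    using eventually_ge_at_top[of "1::nat"]
  proof eventually_elim
    case (elim Q)
    show ?case using eventually_ge_at_top[of "1::real"]
      by eventually_elim (use average_truncation_error_le[OF assms(1) \<tau>(1,2) _ elim] in \<open>simp add: dist_norm D_def\<close>)
  qed
  ultimately show ?thesis
    by (rule tendsto_of_approximations[OF tendsto_average_fns_partial_product tendsto_spectrum_partial[OF assms]])
qed

theorem theorem7p1:
  fixes m :: nat and s :: complex
  assumes "m \<ge> 1" and "Re s > 1"
  shows "((\<lambda>x::real. (1 / of_real x) *
            (\<Sum>n\<in>{1..nat \<lfloor>x\<rfloor>}. fns n s * fns (n + m) (cnj s)))
            \<longlongrightarrow> spectrum m s) at_top
     \<and> (\<lambda>p. complex_of_real (euler_factor m (Re s) p)) has_prod spectrum m s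
     \<and> (odd m \<longrightarrow> ((\<lambda>\<sigma>::real. spectrum m (complex_of_real \<sigma>)) \<longlongrightarrow> 0) (at_right 1))
     \<and> (m \<ge> 2 \<and> even m \<longrightarrow> (\<forall>\<sigma>::real. \<sigma> \<ge> 1 \<longrightarrow>
           spectrum m (complex_of_real \<sigma>) \<in> \<real> \<and> Re (spectrum m (complex_of_real \<sigma>)) \<ge> 1 / 2))"
proof -
  have "m > 0" using assms(1) by simp
  then show ?thesis
    using tendsto_average_fns_product[OF assms(2), of m, unfolded average_def[abs_def]]
      spectrum_has_prod[OF assms(2)] spectrum_odd_tendsto_0[of m] spectrum_even_ge_half[of m]
    by blast
qed

end
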